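(* Let $G$ be a finite $p$-group for some prime $p$. Then the poset $\overline{C}(G)$ of conjugacy classes of cyclic subgroups of $G$ possesses a breaking point if and only if $G$ is either a cyclic $p$-group of order at least $p^2$, or a generalized quaternion $2$-group $Q_{2^n}$ for some $n\geq 3$.
   Context: For a finite group $G$, let $\overline{C}(G)=\{[H]\mid H \text{ a cyclic subgroup of } G\}$, where $[H]$ is the conjugacy class of $H$, partially ordered by $[H_1]\leq[H_2]$ if and only if $H_1\subseteq H_2^g$ for some $g\in G$. A breaking point of $\overline{C}(G)$ is a class $[H]$ with $H\neq 1$ and $H\neq G$ such that for every $[X]\in\overline{C}(G)$ we have $[X]\leq[H]$ or $[H]\leq[X]$. For $n\geq 3$, the generalized quaternion $2$-group is $Q_{2^n}=\langle a,b \mid a^{2^{n-2}}=b^2,\ a^{2^{n-1}}=1,\ b^{-1}ab=a^{-1}\rangle$, of order $2^n$. *)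

theory Defs
  imports "HOL-Algebra.Algebra"
begin

definition conj_set :: "('a, 'b) monoid_scheme \<Rightarrow> 'a \<Rightarrow> 'a set \<Rightarrow> 'a set" where
  "conj_set G g K = {g \<otimes>\<^bsub>G\<^esub> k \<otimes>\<^bsub>G\<^esub> inv\<^bsub>G\<^esub> g | k. k \<in> K}"

text \<open>The order on conjugacy classes: [H] <= [K] iff H is contained in some conjugate of K.\<close>
definition cls_le :: "('a, 'b) monoid_scheme \<Rightarrow> 'a set \<Rightarrow> 'a set \<Rightarrow> bool" where
  "cls_le G H K \<longleftrightarrow> (\<exists>g \<in> carrier G. H \<subseteq> conj_set G g K)"

text \<open>Cyclic subgroups of G are exactly the sets generate G {x}, x in carrier G.\<close>
definition has_breaking_point :: "('a, 'b) monoid_scheme \<Rightarrow> bool" where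
  "has_breaking_point G \<longleftrightarrow>
     (\<exists>x \<in> carrier G.
        generate G {x} \<noteq> {\<one>\<^bsub>G\<^esub>} \<and> generate G {x} \<noteq> carrier G \<and>
        (\<forall>y \<in> carrier G. cls_le G (generate G {y}) (generate G {x})
                        \<or> cls_le G (generate G {x}) (generate G {y})))"

definition is_cyclic_group :: "('a, 'b) monoid_scheme \<Rightarrow> bool" where
  "is_cyclic_group G \<longleftrightarrow> (\<exists>x \<in> carrier G. generate G {x} = carrier G)"

definition is_gen_quaternion :: "('a, 'b) monoid_scheme \<Rightarrow> nat \<Rightarrow> bool" where
  "is_gen_quaternion G n \<longleftrightarrow> n \<ge> 3 \<and> order G = 2 ^ n \<and>
     (\<exists>a \<in> carrier G. \<exists>b \<in> carrier G. generate G {a, b} = carrier G \<and>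
        a [^]\<^bsub>G\<^esub> ((2::nat) ^ (n - 2)) = b [^]\<^bsub>G\<^esub> (2::nat) \<and>
        a [^]\<^bsub>G\<^esub> ((2::nat) ^ (n - 1)) = \<one>\<^bsub>G\<^esub> \<and>
        inv\<^bsub>G\<^esub> b \<otimes>\<^bsub>G\<^esub> a \<otimes>\<^bsub>G\<^esub> b = inv\<^bsub>G\<^esub> a)"

end

theory Submission
  imports Defs
begin

text \<open>
  If \<open>\<langle>x\<rangle>\<close> is a breaking point, compare it with a central subgroup \<open>\<langle>z\<rangle>\<close> of order \<open>p\<close> and
  with an arbitrary subgroup \<open>\<langle>y\<rangle>\<close> of order \<open>p\<close>: conjugation fixes \<open>\<langle>z\<rangle>\<close> pointwise and the
  cyclic group \<open>\<langle>x\<rangle>\<close> has only one subgroup of order \<open>p\<close>, so \<open>\<langle>y\<rangle> = \<langle>z\<rangle>\<close>. Conversely, a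
  unique subgroup of order \<open>p\<close> lies in every nontrivial cyclic subgroup and is a breaking point
  once \<open>|G| > p\<close>. The theorem thus reduces to the classical fact that a \<open>p\<close>-group with a unique
  subgroup of order \<open>p\<close> is cyclic or generalized quaternion.

  For the latter take \<open>a\<close> of maximal order. If \<open>\<langle>a\<rangle> \<noteq> G\<close>, normalizers grow and yield
  \<open>g \<notin> \<langle>a\<rangle>\<close> with \<open>g\<inverse> a g = a^r\<close> and \<open>g^p = a^s\<close>. No \<open>g a^j\<close> can have order \<open>p\<close> (it would lie in
  \<open>\<langle>z\<rangle> \<subseteq> \<langle>a\<rangle>\<close>), and a congruence computation then forces \<open>p = 2\<close>, \<open>g\<inverse> a g = a\<inverse>\<close> and
  \<open>g\<^sup>2 = a^(|a|/2)\<close>, so \<open>Q = \<langle>a\<rangle> \<union> \<langle>a\<rangle> g\<close> is generalized quaternion. Finally every element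
  normalizing \<open>\<langle>a\<rangle>\<close> lies in \<open>Q\<close>, and normalizers growing once more give \<open>Q = G\<close>.
\<close>

section \<open>Congruences\<close>

lemma coprime_linear_congruence_solvable:
  fixes u M s :: int
  assumes "coprime u M"
  shows "\<exists>j. M dvd s + j * u"
proof -
  obtain x y where "x * u + y * M = gcd u M" using bezout_int by blast
  with assms have xy: "1 - x * u = y * M" by simp
  have "s + (- s * x) * u = s * (1 - x * u)" by (simp add: algebra_simps)
  also have "\<dots> = M * (s * y)" unfolding xy by (simp add: algebra_simps)
  finally show ?thesis by (intro exI[of _ "- s * x"]) simp
qed

lemma power_one_plus_mult_cong:
  fixes P t :: int
  shows "P\<^sup>2 dvd (1 + P * t) ^ i - 1 - int i * P * t"
proof (induction i)
  case 0
  then show ?case by simp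
next
  case (Suc i)
  then obtain q where q: "(1 + P * t) ^ i = 1 + int i * P * t + P\<^sup>2 * q"
    by (metis dvd_def diff_diff_eq eq_diff_eq add.commute)
  have "(1 + P * t) ^ Suc i - 1 - int (Suc i) * P * t = P\<^sup>2 * (q + int i * t\<^sup>2 + P * t * q)"
    by (simp add: q power2_eq_square algebra_simps)
  then show ?case by simp
qed

lemma sum_power_one_plus_mult_cong:
  fixes P t :: int
  shows "P\<^sup>2 dvd 2 * (\<Sum>i<n. (1 + P * t) ^ i) - 2 * int n - P * t * int n * (int n - 1)"
proof (induction n)
  case 0
  then show ?case by simp
next
  case (Suc n)
  have "2 * (\<Sum>i<Suc n. (1 + P * t) ^ i) - 2 * int (Suc n) - P * t * int (Suc n) * (int (Suc n) - 1)
     = (2 * (\<Sum>i<n. (1 + P * t) ^ i) - 2 * int n - P * t * int n * (int n - 1))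
       + 2 * ((1 + P * t) ^ n - 1 - int n * P * t)"
    by (simp add: algebra_simps)
  then show ?case
    using Suc dvd_mult[OF power_one_plus_mult_cong] by (metis dvd_add)
qed

text \<open>With \<open>r = 1 + p t\<close> the sum \<open>S = 1 + r + \<dots> + r^(p-1)\<close> satisfies
  \<open>2 S \<equiv> 2 p + p\<^sup>2 t (p - 1) (mod p\<^sup>2)\<close>, so for odd \<open>p\<close> it is divisible by \<open>p\<close> exactly once.\<close>

lemma sum_powers_exact_odd_prime_factor:
  fixes t :: int
  assumes p: "Factorial_Ring.prime p" "p \<noteq> 2"
  shows "\<exists>u. (\<Sum>i<p. (1 + int p * t) ^ i) = int p * u \<and> \<not> int p dvd u"
proof -
  define P where "P = int p"
  define S where "S = (\<Sum>i<p. (1 + P * t) ^ i)"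
  have P: "Factorial_Ring.prime P" "P \<ge> 3"
    using p prime_ge_2_nat[of p] by (auto simp: P_def)
  have "2 * S - 2 * P = (2 * S - 2 * P - P * t * P * (P - 1)) + P\<^sup>2 * (t * (P - 1))"
    by (simp add: power2_eq_square algebra_simps)
  moreover have "P\<^sup>2 dvd 2 * S - 2 * P - P * t * P * (P - 1)"
    using sum_power_one_plus_mult_cong[of P t p] by (simp add: S_def P_def)
  ultimately have SP: "P\<^sup>2 dvd 2 * S - 2 * P"
    by (metis dvd_add dvd_triv_left)
  have P2: "\<not> P dvd 2"
  proof
    assume "P dvd 2"
    then have "P \<le> 2" by (rule zdvd_imp_le) simp
    then show False using P by simp
  qed
  have "P dvd 2 * S - 2 * P"
    using SP by (rule dvd_trans[rotated]) (simp add: power2_eq_square)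
  moreover have "2 * S = (2 * S - 2 * P) + P * 2" by simp
  ultimately have "P dvd 2 * S"
    by (metis dvd_add dvd_triv_left)
  then have "P dvd S"
    using P P2 prime_dvd_mult_iff by blast
  then obtain u where u: "S = P * u" by (metis dvd_def)
  have "\<not> P dvd u"
  proof
    assume "P dvd u"
    then have "P\<^sup>2 dvd 2 * S" using u by (simp add: power2_eq_square)
    moreover have "2 * P = 2 * S - (2 * S - 2 * P)" by simp
    ultimately have "P\<^sup>2 dvd 2 * P" using SP by (metis dvd_diff)
    then have "P dvd 2" using P by (simp add: power2_eq_square)
    then show False using P2 by simp
  qed
  then show ?thesis using u by (auto simp: P_def S_def)
qed

lemma cyclic_extension_congruences_two_odd:
  fixes r s t :: int
  assumes m: "m \<ge> 1" and t: "r = 1 + 2 * t" and "even s"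
    and no_root: "\<And>j. \<not> 2 ^ m dvd s + j * (1 + r)"
  shows "odd t"
proof
  assume "even t"
  then have "coprime (t + 1) (2 ^ (m - 1))" by simp
  moreover obtain s2 where s2: "s = 2 * s2" using \<open>even s\<close> by blast
  ultimately obtain j where "2 ^ (m - 1) dvd s2 + j * (t + 1)"
    using coprime_linear_congruence_solvable by blast
  then have "2 * 2 ^ (m - 1) dvd 2 * (s2 + j * (t + 1))" by (rule mult_dvd_mono[OF dvd_refl])
  moreover have "(2::int) ^ m = 2 * 2 ^ (m - 1)" using m by (cases m) auto
  ultimately have "2 ^ m dvd s + j * (1 + r)" by (simp add: s2 t algebra_simps)
  then show False using no_root by blast
qed

lemma cyclic_extension_congruences_two:
  fixes r s t :: int
  assumes m: "m \<ge> 1" and t: "r = 1 + 2 * t" and "even s"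
    and rp: "2 ^ m dvd r\<^sup>2 - 1"
    and r1: "\<not> 2 ^ m dvd r - 1"
    and sr: "2 ^ m dvd s * (r - 1)"
    and no_root: "\<And>j. \<not> 2 ^ m dvd s + j * (1 + r)"
  shows "m \<ge> 2 \<and> 2 ^ m dvd r + 1 \<and> 2 ^ m dvd s - 2 ^ (m - 1)"
proof -
  have m2: "m \<ge> 2"
    using m r1 t by (cases "m = 1") auto
  have e1: "(2::int) ^ m = 2 * 2 ^ (m - 1)" using m by (cases m) auto
  have e2: "(2::int) ^ (m - 1) = 2 * 2 ^ (m - 2)" using m2 by (cases m; cases "m - 1") auto
  have "odd t" using cyclic_extension_congruences_two_odd[OF m t \<open>even s\<close> no_root] .
  then have ct: "coprime (2 ^ k) t" for k :: nat by simp
  have "2 * 2 ^ (m - 1) dvd 2 * (s * t)"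
    using sr e1 t by (simp add: algebra_simps)
  then have "2 ^ (m - 1) dvd s * t" by simp
  then have "2 ^ (m - 1) dvd s" using ct coprime_dvd_mult_left_iff by blast
  then obtain \<sigma> where sg: "s = 2 ^ (m - 1) * \<sigma>" by (metis dvd_def)
  have "2 * 2 * 2 ^ (m - 2) dvd 4 * (t * (t + 1))"
    using rp e1 e2 t by (simp add: power2_eq_square algebra_simps)
  then have "2 ^ (m - 2) dvd t * (t + 1)" by simp
  then have "2 ^ (m - 2) dvd t + 1" using ct coprime_dvd_mult_right_iff by blast
  then obtain \<tau> where tg: "t + 1 = 2 ^ (m - 2) * \<tau>" by (metis dvd_def)
  have S: "1 + r = 2 ^ (m - 1) * \<tau>" using t tg e2 by (simp add: algebra_simps)
  have "odd \<sigma>"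
  proof
    assume "even \<sigma>"
    then have "2 ^ m dvd s" using sg e1 by auto
    then show False using no_root[of 0] by simp
  qed
  moreover have "even \<tau>"
  proof (rule ccontr)
    assume "odd \<tau>"
    then have "even (\<sigma> + \<tau>)" using \<open>odd \<sigma>\<close> by simp
    then obtain k where k: "\<sigma> + \<tau> = 2 * k" by blast
    have "s + 1 * (1 + r) = 2 ^ (m - 1) * (\<sigma> + \<tau>)" using sg S by (simp add: algebra_simps)
    also have "\<dots> = 2 ^ m * k" using k e1 by simp
    finally show False using no_root[of 1] by simp
  qed
  ultimately obtain k k' where k: "\<tau> = 2 * k" and k': "\<sigma> = 2 * k' + 1"
    by (blast elim: evenE oddE)
  have "r + 1 = 2 ^ (m - 1) * \<tau>" using S by simp
  also have "\<dots> = 2 ^ m * k" using k e1 by simp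
  finally have "2 ^ m dvd r + 1" by simp
  moreover have "s - 2 ^ (m - 1) = 2 ^ (m - 1) * (\<sigma> - 1)" using sg by (simp add: algebra_simps)
  moreover have "\<dots> = 2 ^ m * k'" using k' e1 by simp
  ultimately show ?thesis using m2 by simp
qed

lemma four_not_dvd_square_plus_one: "\<not> (4::int) dvd r\<^sup>2 + 1"
proof
  assume dvd: "4 dvd r\<^sup>2 + 1"
  show False
  proof (cases "even r")
    case True
    then obtain t where "r\<^sup>2 + 1 = 4 * t\<^sup>2 + 1" by (auto simp: power2_eq_square elim!: evenE)
    then have "(4::int) dvd 1" using dvd by (metis dvd_add_right_iff dvd_triv_left)
    then show False by simp
  next
    case False
    then obtain t where "r = 2 * t + 1" by (metis oddE)
    then have "r\<^sup>2 + 1 = 4 * (t\<^sup>2 + t) + 2" by (simp add: power2_eq_square algebra_simps)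
    then have "(4::int) dvd 2" using dvd by (metis dvd_add_right_iff dvd_triv_left)
    then show False by simp
  qed
qed

lemma cyclic_extension_congruences_odd:
  fixes s' t :: int
  assumes p: "Factorial_Ring.prime p" "p \<noteq> 2" and m: "m \<ge> 1"
  shows "\<exists>j. int p ^ m dvd int p * s' + j * (\<Sum>i<p. (1 + int p * t) ^ i)"
proof -
  define P where "P = int p"
  obtain u where u: "(\<Sum>i<p. (1 + P * t) ^ i) = P * u" and "\<not> P dvd u"
    using sum_powers_exact_odd_prime_factor[OF p, of t] by (auto simp: P_def)
  moreover have "Factorial_Ring.prime P" using p by (simp add: P_def)
  ultimately have "coprime u (P ^ (m - 1))"
    using prime_imp_coprime coprime_commute by auto
  then obtain j where "P ^ (m - 1) dvd s' + j * u"
    using coprime_linear_congruence_solvable by blast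
  then have "P * P ^ (m - 1) dvd P * (s' + j * u)" by (rule mult_dvd_mono[OF dvd_refl])
  moreover have "P ^ m = P * P ^ (m - 1)" using m by (cases m) auto
  ultimately have "P ^ m dvd P * s' + j * (\<Sum>i<p. (1 + P * t) ^ i)"
    by (simp add: u algebra_simps)
  then show ?thesis by (auto simp: P_def)
qed

text \<open>The arithmetic of an extension of a cyclic group \<open>\<langle>a\<rangle>\<close> of order \<open>p^m\<close> by an element \<open>g\<close>
  with \<open>g\<inverse> a g = a^r\<close> and \<open>g^p = a^s\<close>: the first three hypotheses are the consistency
  conditions, the last one says that no \<open>g a^j\<close> has \<open>p\<close>-th power \<open>1\<close>.\<close>

lemma cyclic_extension_congruences:
  fixes p m :: nat and r s :: int
  assumes p: "Factorial_Ring.prime p" and m: "m \<ge> 1"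
    and rp: "int p ^ m dvd r ^ p - 1"
    and r1: "\<not> int p ^ m dvd r - 1"
    and sr: "int p ^ m dvd s * (r - 1)"
    and no_root: "\<And>j. \<not> int p ^ m dvd s + j * (\<Sum>i<p. r ^ i)"
  shows "p = 2 \<and> m \<ge> 2 \<and> 2 ^ m dvd r + 1 \<and> 2 ^ m dvd s - 2 ^ (m - 1)"
proof -
  define P where "P = int p"
  have P: "Factorial_Ring.prime P" using p by (simp add: P_def)
  have sr': "P ^ m dvd s * (r - 1)" using sr by (simp add: P_def)
  have "P dvd r - 1"
  proof (rule ccontr)
    assume "\<not> P dvd r - 1"
    then have "coprime (P ^ m) (r - 1)" using P prime_imp_coprime by auto
    then have "P ^ m dvd s" using sr' coprime_dvd_mult_left_iff by blast
    then show False using no_root[of 0] by (simp add: P_def)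
  qed
  then obtain t where t: "r = 1 + P * t" by (metis dvd_def diff_eq_eq add.commute)
  have "P dvd s"
  proof (rule ccontr)
    assume "\<not> P dvd s"
    then have "coprime (P ^ m) s" using P prime_imp_coprime by auto
    then have "P ^ m dvd r - 1" using sr' coprime_dvd_mult_right_iff by blast
    then show False using r1 by (simp add: P_def)
  qed
  then obtain s' where s': "s = P * s'" by (metis dvd_def)
  show ?thesis
  proof (cases "p = 2")
    case False
    then show ?thesis
      using cyclic_extension_congruences_odd[OF p False m, of s' t] no_root t s' by (auto simp: P_def)
  next
    case True
    then show ?thesis
      using cyclic_extension_congruences_two[OF m, of r t s] rp r1 sr no_root t s'
      by (simp add: P_def numeral_2_eq_2 algebra_simps)
  qed
qed

section \<open>Actions of \<open>p\<close>-groups\<close>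

lemma group_actionI:
  fixes G (structure)
  assumes G: "group G"
    and closed: "\<And>g x. g \<in> carrier G \<Longrightarrow> x \<in> E \<Longrightarrow> f g x \<in> E"
    and one: "\<And>x. x \<in> E \<Longrightarrow> f \<one> x = x"
    and mult: "\<And>g h x. \<lbrakk>g \<in> carrier G; h \<in> carrier G; x \<in> E\<rbrakk> \<Longrightarrow> f (g \<otimes> h) x = f g (f h x)"
  shows "group_action G E (\<lambda>g. restrict (f g) E)"
proof -
  interpret group G by (rule G)
  have bij: "restrict (f g) E \<in> Bij E" if g: "g \<in> carrier G" for g
  proof -
    have inv_left: "f (inv g) (f g x) = x" if "x \<in> E" for x
      using that g one mult[of "inv g" g x] by simp
    have inv_right: "f g (f (inv g) x) = x" if "x \<in> E" for x
      using that g one mult[of g "inv g" x] by simp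
    have "inj_on (f g) E"
      by (metis inj_onI inv_left)
    moreover have "f g ` E = E"
    proof
      show "f g ` E \<subseteq> E" using closed g by blast
      show "E \<subseteq> f g ` E"
        using closed[of "inv g"] g inv_right by (metis image_eqI inv_closed subsetI)
    qed
    ultimately show ?thesis
      by (simp add: Bij_def bij_betw_def inj_on_def)
  qed
  show ?thesis
    unfolding group_action_def group_hom_def group_hom_axioms_def hom_def
  proof (intro conjI CollectI ballI)
    show "(\<lambda>g. restrict (f g) E) \<in> carrier G \<rightarrow> carrier (BijGroup E)"
      using bij by (auto simp: BijGroup_def)
    fix g h assume g: "g \<in> carrier G" and h: "h \<in> carrier G"
    show "restrict (f (g \<otimes> h)) E = restrict (f g) E \<otimes>\<^bsub>BijGroup E\<^esub> restrict (f h) E"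
      using bij[OF g] bij[OF h] g h closed mult
      by (auto simp: BijGroup_def compose_def restrict_def fun_eq_iff)
  qed (use G group_BijGroup in auto)
qed

context group_action
begin

lemma orbit_eq_singleton_iff:
  assumes "x \<in> E"
  shows "orbit G \<phi> x = {x} \<longleftrightarrow> (\<forall>g \<in> carrier G. \<phi> g x = x)"
  using orbit_refl[OF assms] unfolding orbit_def by blast

lemma card_orbit_eq_one_iff:
  assumes "x \<in> E"
  shows "card (orbit G \<phi> x) = 1 \<longleftrightarrow> orbit G \<phi> x = {x}"
  using orbit_refl[OF assms] by (auto simp: card_1_singleton_iff)

lemma orbits_card_one_eq:
  "{orb \<in> orbits G E \<phi>. card orb = 1} = (\<lambda>x. {x}) ` {x \<in> E. \<forall>g \<in> carrier G. \<phi> g x = x}"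
proof (intro equalityI subsetI)
  fix orb assume "orb \<in> {orb \<in> orbits G E \<phi>. card orb = 1}"
  then obtain x where x: "x \<in> E" "orb = orbit G \<phi> x" "card orb = 1"
    unfolding orbits_def by blast
  then have "orb = {x}" using card_orbit_eq_one_iff by blast
  with x show "orb \<in> (\<lambda>x. {x}) ` {x \<in> E. \<forall>g \<in> carrier G. \<phi> g x = x}"
    using orbit_eq_singleton_iff by blast
next
  fix orb assume "orb \<in> (\<lambda>x. {x}) ` {x \<in> E. \<forall>g \<in> carrier G. \<phi> g x = x}"
  then obtain x where "x \<in> E" "\<forall>g \<in> carrier G. \<phi> g x = x" "orb = {x}" by blast
  then show "orb \<in> {orb \<in> orbits G E \<phi>. card orb = 1}"
    using orbit_eq_singleton_iff unfolding orbits_def by force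
qed

lemma card_orbit_prime_power:
  assumes p: "Factorial_Ring.prime p" and ord: "order G = p ^ k" and orb: "orb \<in> orbits G E \<phi>"
  shows "\<exists>i. card orb = p ^ i"
proof -
  obtain x where x: "x \<in> E" "orb = orbit G \<phi> x"
    using orb unfolding orbits_def by blast
  then have "card orb dvd p ^ k"
    using orbit_stabilizer_theorem[OF x(1)] ord by (metis dvd_triv_left)
  then show ?thesis using p divides_primepow_nat by blast
qed

lemma card_fixed_points_cong:
  assumes finE: "finite E" and p: "Factorial_Ring.prime p" and ord: "order G = p ^ k"
  shows "card E mod p = card {x \<in> E. \<forall>g \<in> carrier G. \<phi> g x = x} mod p"
proof -
  have orbit_mod: "card orb mod p = (if card orb = 1 then 1 else 0) mod p"
    if orb: "orb \<in> orbits G E \<phi>" for orb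
  proof -
    obtain i where "card orb = p ^ i" using card_orbit_prime_power[OF p ord orb] by blast
    then show ?thesis using prime_gt_1_nat[OF p] by (cases i) auto
  qed
  have "finite (orbits G E \<phi>)"
    using finE unfolding orbits_def by simp
  have "card E = (\<Sum>orb\<in>orbits G E \<phi>. card orb)"
    using disjoint_sum[OF finE, of "\<lambda>_. 1::nat"] by simp
  then have "card E mod p = (\<Sum>orb\<in>orbits G E \<phi>. card orb mod p) mod p"
    by (simp add: mod_sum_eq)
  also have "\<dots> = (\<Sum>orb\<in>orbits G E \<phi>. (if card orb = 1 then 1 else 0) mod p) mod p"
    using orbit_mod by (metis (no_types, lifting) sum.cong)
  also have "\<dots> = card {orb \<in> orbits G E \<phi>. card orb = 1} mod p"
    using \<open>finite (orbits G E \<phi>)\<close> by (simp add: mod_sum_eq sum.If_cases Int_def)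
  also have "\<dots> = card {x \<in> E. \<forall>g \<in> carrier G. \<phi> g x = x} mod p"
    unfolding orbits_card_one_eq by (simp add: card_image)
  finally show ?thesis .
qed

lemma exists_other_fixed_point:
  assumes finE: "finite E" and p: "Factorial_Ring.prime p" and ord: "order G = p ^ k"
    and dvd: "p dvd card E" and x: "x \<in> E" "\<forall>g \<in> carrier G. \<phi> g x = x"
  shows "\<exists>y \<in> E. y \<noteq> x \<and> (\<forall>g \<in> carrier G. \<phi> g y = y)"
proof (rule ccontr)
  assume "\<not> ?thesis"
  then have "{y \<in> E. \<forall>g \<in> carrier G. \<phi> g y = y} = {x}"
    using x by blast
  then show False
    using card_fixed_points_cong[OF finE p ord] dvd prime_gt_1_nat[OF p] by simp
qed

end

section \<open>Cyclic subgroups and conjugation\<close>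

context group
begin

lemma self_in_generate: "x \<in> carrier G \<Longrightarrow> x \<in> generate G {x}"
  by (simp add: generate.incl)

lemma generate_singleton_subset: "x \<in> carrier G \<Longrightarrow> generate G {x} \<subseteq> carrier G"
  by (simp add: generate_incl)

lemma generate_singleton_subgroup: "x \<in> carrier G \<Longrightarrow> subgroup (generate G {x}) G"
  by (simp add: generate_is_subgroup)

lemma int_pow_in_generate: "x \<in> carrier G \<Longrightarrow> x [^] (i::int) \<in> generate G {x}"
  using generate_pow by blast

lemma nat_pow_in_generate: "x \<in> carrier G \<Longrightarrow> x [^] (n::nat) \<in> generate G {x}"
  using int_pow_in_generate[of x "int n"] by (simp add: int_pow_int)

lemma generate_singleton_mono:
  "x \<in> carrier G \<Longrightarrow> y \<in> generate G {x} \<Longrightarrow> generate G {y} \<subseteq> generate G {x}"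
  by (simp add: generate_singleton_subgroup generate_subgroup_incl)

lemma in_generate_singleton_int_pow:
  "x \<in> carrier G \<Longrightarrow> y \<in> generate G {x} \<Longrightarrow> \<exists>i::int. y = x [^] i"
  using generate_pow by blast

lemma card_generate_singleton: "x \<in> carrier G \<Longrightarrow> card (generate G {x}) = ord x"
  by (simp add: generate_pow_card)

lemma generate_singleton_eq_if_ord_eq:
  assumes fin: "finite (carrier G)" and x: "x \<in> carrier G" and y: "y \<in> carrier G"
    and sub: "generate G {y} \<subseteq> generate G {x}" and ord: "ord y = ord x"
  shows "generate G {y} = generate G {x}"
proof -
  have "finite (generate G {x})"
    using fin generate_singleton_subset[OF x] finite_subset by blast
  then show ?thesis
    using sub card_subset_eq card_generate_singleton x y ord by metis
qed

lemma commutes_inv: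
  assumes x: "x \<in> carrier G" and y: "y \<in> carrier G" and comm: "x \<otimes> y = y \<otimes> x"
  shows "x \<otimes> inv y = inv y \<otimes> x"
proof -
  have "y \<otimes> (x \<otimes> inv y) = x" using x y comm by (metis inv_solve_right m_assoc inv_closed m_closed)
  also have "\<dots> = y \<otimes> (inv y \<otimes> x)" using x y by (simp add: m_assoc[symmetric])
  finally show ?thesis using x y by (meson inv_closed l_cancel m_closed)
qed

lemma m_cancel_inv_left [simp]: "g \<in> carrier G \<Longrightarrow> y \<in> carrier G \<Longrightarrow> g \<otimes> (inv g \<otimes> y) = y"
  by (simp add: m_assoc[symmetric])

lemma inv_m_cancel_left [simp]: "g \<in> carrier G \<Longrightarrow> y \<in> carrier G \<Longrightarrow> inv g \<otimes> (g \<otimes> y) = y"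
  by (simp add: m_assoc[symmetric])

lemma conj_nat_pow:
  assumes g: "g \<in> carrier G" and x: "x \<in> carrier G"
  shows "(inv g \<otimes> x \<otimes> g) [^] (n::nat) = inv g \<otimes> x [^] n \<otimes> g"
proof (induction n)
  case 0
  then show ?case using g by simp
next
  case (Suc n)
  have "(inv g \<otimes> x \<otimes> g) [^] Suc n = inv g \<otimes> (x [^] n \<otimes> (g \<otimes> inv g) \<otimes> x) \<otimes> g"
    using Suc g x by (simp add: m_assoc)
  also have "\<dots> = inv g \<otimes> x [^] Suc n \<otimes> g" using g x by (simp add: m_assoc)
  finally show ?case .
qed

lemma conj_int_pow:
  assumes g: "g \<in> carrier G" and x: "x \<in> carrier G"
  shows "(inv g \<otimes> x \<otimes> g) [^] (i::int) = inv g \<otimes> x [^] i \<otimes> g"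
proof (cases i rule: int_cases2)
  case (nonneg n)
  then show ?thesis using conj_nat_pow[OF g x, of n] by (simp add: int_pow_int)
next
  case (nonpos n)
  then have "(inv g \<otimes> x \<otimes> g) [^] i = inv (inv g \<otimes> x [^] n \<otimes> g)"
    using g x conj_nat_pow[OF g x] by (simp add: int_pow_neg_int)
  also have "\<dots> = inv g \<otimes> x [^] i \<otimes> g"
    using nonpos g x by (simp add: inv_mult_group m_assoc int_pow_neg_int)
  finally show ?thesis .
qed

lemma conj_iterate:
  assumes g: "g \<in> carrier G" and a: "a \<in> carrier G" and r: "inv g \<otimes> a \<otimes> g = a [^] (r::int)"
  shows "inv (g [^] (n::nat)) \<otimes> a \<otimes> g [^] n = a [^] (r ^ n)"
proof (induction n)
  case 0
  then show ?case using a by simp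
next
  case (Suc n)
  have "inv (g [^] Suc n) \<otimes> a \<otimes> g [^] Suc n = inv g \<otimes> (inv (g [^] n) \<otimes> a \<otimes> g [^] n) \<otimes> g"
    using g a by (simp add: inv_mult_group m_assoc)
  also have "\<dots> = (inv g \<otimes> a \<otimes> g) [^] (r ^ n)"
    using Suc conj_int_pow[OF g a] by simp
  also have "\<dots> = a [^] (r * r ^ n)" using r a by (simp add: int_pow_pow)
  finally show ?case by simp
qed

lemma conj_mult_int_pow_nat_pow:
  assumes g: "g \<in> carrier G" and a: "a \<in> carrier G" and r: "inv g \<otimes> a \<otimes> g = a [^] (r::int)"
  shows "(g \<otimes> a [^] (j::int)) [^] (n::nat) = g [^] n \<otimes> a [^] (j * (\<Sum>i<n. r ^ i))"
proof (induction n)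
  case 0
  then show ?case using a by simp
next
  case (Suc n)
  define S where "S = (\<Sum>i<n. r ^ i)"
  have swap: "a [^] (k::int) \<otimes> g = g \<otimes> a [^] (r * k)" for k
    using conj_int_pow[OF g a, of k] r a g by (simp add: int_pow_pow m_assoc[symmetric])
  have "(g \<otimes> a [^] j) [^] Suc n = g [^] n \<otimes> (a [^] (j * S) \<otimes> g) \<otimes> a [^] j"
    using Suc g a by (simp add: S_def m_assoc)
  also have "\<dots> = g [^] Suc n \<otimes> a [^] (r * (j * S) + j)"
    using swap g a by (simp add: m_assoc int_pow_mult)
  also have "r * (j * S) + j = j * (\<Sum>i<Suc n. r ^ i)"
    unfolding S_def sum.lessThan_Suc_shift by (simp add: sum_distrib_left algebra_simps)
  finally show ?case .
qed

lemma normalizer_congruences: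
  assumes g: "g \<in> carrier G" and a: "a \<in> carrier G"
    and r: "inv g \<otimes> a \<otimes> g = a [^] (r::int)" and s: "g [^] (n::nat) = a [^] (s::int)"
  shows "int (ord a) dvd r ^ n - 1" and "int (ord a) dvd s * (r - 1)"
proof -
  have gn: "g [^] n \<in> carrier G" using g by simp
  have "a \<otimes> a [^] s = a [^] (1 + s)" "a [^] s \<otimes> a = a [^] (s + 1)"
    using a by (simp_all add: int_pow_mult)
  then have "a \<otimes> a [^] s = a [^] s \<otimes> a" by (simp add: add.commute)
  then have "inv (g [^] n) \<otimes> a \<otimes> g [^] n = a"
    using s a gn by (simp add: m_assoc)
  then have "a [^] (r ^ n) = a [^] (1::int)" using conj_iterate[OF g a r, of n] a by simp
  then show "int (ord a) dvd r ^ n - 1" using int_pow_eq[OF a] dvd_diff_commute by blast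
  have "inv g \<otimes> g [^] n \<otimes> g = g [^] n"
    using g nat_pow_Suc2[OF g, of n] by (simp add: m_assoc)
  then have "a [^] (r * s) = a [^] s"
    using conj_int_pow[OF g a, of s] r s a by (simp add: int_pow_pow)
  then have "int (ord a) dvd r * s - s" using int_pow_eq[OF a] dvd_diff_commute by blast
  then show "int (ord a) dvd s * (r - 1)" by (simp add: algebra_simps)
qed

lemma mem_conj_set: "y \<in> conj_set G g K \<longleftrightarrow> (\<exists>k \<in> K. y = g \<otimes> k \<otimes> inv g)"
  unfolding conj_set_def by blast

lemma conj_set_one: "K \<subseteq> carrier G \<Longrightarrow> conj_set G \<one> K = K"
  unfolding conj_set_def by force

lemma cls_le_of_subset: "H \<subseteq> K \<Longrightarrow> K \<subseteq> carrier G \<Longrightarrow> cls_le G H K"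
  unfolding cls_le_def using conj_set_one one_closed by metis

lemma central_mem_conj_set:
  assumes g: "g \<in> carrier G" and K: "K \<subseteq> carrier G"
    and central: "\<forall>y \<in> carrier G. u \<otimes> y = y \<otimes> u" and u: "u \<in> conj_set G g K"
  shows "u \<in> K"
proof -
  obtain k where k: "k \<in> K" "u = g \<otimes> k \<otimes> inv g" using u mem_conj_set by blast
  then have kc: "k \<in> carrier G" and uc: "u \<in> carrier G" using g K by auto
  have "g \<otimes> k = u \<otimes> g" using k g kc by (simp add: m_assoc)
  also have "\<dots> = g \<otimes> u" using central g by simp
  finally have "k = u" using g kc uc by simp
  then show ?thesis using k by simp
qed

lemma conj_set_central:
  assumes g: "g \<in> carrier G" and K: "K \<subseteq> carrier G"
    and central: "\<forall>k \<in> K. \<forall>y \<in> carrier G. k \<otimes> y = y \<otimes> k"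
  shows "conj_set G g K = K"
proof -
  have "g \<otimes> k \<otimes> inv g = k" if k: "k \<in> K" for k
  proof -
    have "k \<otimes> inv g = inv g \<otimes> k" using k central g by blast
    then show ?thesis using k K g by (simp add: m_assoc subsetD)
  qed
  then show ?thesis unfolding conj_set_def by force
qed

lemma generate_central:
  assumes u: "u \<in> carrier G" and central: "\<forall>y \<in> carrier G. u \<otimes> y = y \<otimes> u"
  shows "\<forall>v \<in> generate G {u}. \<forall>y \<in> carrier G. v \<otimes> y = y \<otimes> v"
proof (intro ballI)
  fix v y assume "v \<in> generate G {u}" "y \<in> carrier G"
  then show "v \<otimes> y = y \<otimes> v"
    using u central
  proof (induction rule: generate.induct)
    case (inv h)
    then show ?case using commutes_inv[of y h] by auto
  next
    case (eng h1 h2)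
    then have "h1 \<in> carrier G" "h2 \<in> carrier G"
      using generate_singleton_subset[OF u] by auto
    then have "h1 \<otimes> h2 \<otimes> y = h1 \<otimes> (y \<otimes> h2)" using eng by (simp add: m_assoc)
    also have "\<dots> = (y \<otimes> h1) \<otimes> h2" using eng \<open>h1 \<in> carrier G\<close> \<open>h2 \<in> carrier G\<close>
      by (simp flip: m_assoc)
    finally show ?case using eng \<open>h1 \<in> carrier G\<close> \<open>h2 \<in> carrier G\<close> by (simp add: m_assoc)
  qed auto
qed

lemma rcoset_action:
  assumes H: "subgroup H G"
  shows "group_action (G\<lparr>carrier := H\<rparr>) (rcosets H)
           (\<lambda>h. restrict (\<lambda>Y. Y #> inv h) (rcosets H))"
proof (rule group_actionI[OF subgroup_imp_group[OF H]])
  interpret H: subgroup H G by (rule H)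
  fix h Y assume h: "h \<in> carrier (G\<lparr>carrier := H\<rparr>)" and Y: "Y \<in> rcosets H"
  obtain a where a: "a \<in> carrier G" "Y = H #> a" using Y unfolding RCOSETS_def by blast
  have "Y #> inv h = H #> (a \<otimes> inv h)"
    using a h H.subset by (auto simp: coset_mult_assoc)
  then show "Y #> inv h \<in> rcosets H" using a h H.subset by (auto intro: rcosetsI)
next
  fix Y assume "Y \<in> rcosets H"
  then show "Y #> inv \<one>\<^bsub>G\<lparr>carrier := H\<rparr>\<^esub> = Y"
    using subgroup.rcosets_carrier[OF H is_group] by simp
next
  fix g h Y assume "g \<in> carrier (G\<lparr>carrier := H\<rparr>)" "h \<in> carrier (G\<lparr>carrier := H\<rparr>)"
    and Y: "Y \<in> rcosets H"
  then have "g \<in> carrier G" "h \<in> carrier G" "Y \<subseteq> carrier G"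
    using subgroup.subset[OF H] subgroup.rcosets_carrier[OF H is_group Y] by auto
  then show "Y #> inv (g \<otimes>\<^bsub>G\<lparr>carrier := H\<rparr>\<^esub> h) = Y #> inv h #> inv g"
    by (simp add: inv_mult_group coset_mult_assoc)
qed

lemma fixed_rcoset_normalizes:
  assumes H: "subgroup H G" and a: "a \<in> carrier G"
    and fixed: "\<And>h. h \<in> H \<Longrightarrow> (H #> a) #> inv h = H #> a" and x: "x \<in> H"
  shows "a \<otimes> x \<otimes> inv a \<in> H"
proof -
  interpret H: subgroup H G by (rule H)
  have xc: "x \<in> carrier G" using x H.subset by blast
  have "H #> (a \<otimes> x) = H #> a"
    using fixed[of "inv x"] x a xc H.subset by (simp add: coset_mult_assoc)
  then have "a \<otimes> x \<in> H #> a"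
    using rcos_self[OF _ H] a xc by (metis m_closed)
  then obtain h where h: "h \<in> H" "a \<otimes> x = h \<otimes> a" unfolding r_coset_def by blast
  then have "a \<otimes> x \<otimes> inv a = h"
    using a xc H.subset by (simp add: m_assoc subsetD)
  then show ?thesis using h by simp
qed

end

section \<open>Finite \<open>p\<close>-groups\<close>

locale finite_p_group = group G for G (structure) + fixes p :: nat
  assumes finite_carrier: "finite (carrier G)" and prime_p: "Factorial_Ring.prime p"
    and order_prime_power: "\<exists>k. order G = p ^ k"
begin

lemma one_less_p: "p > 1"
  using prime_p prime_gt_1_nat by blast

lemma ord_prime_power: "x \<in> carrier G \<Longrightarrow> \<exists>e. ord x = p ^ e"
proof -
  assume x: "x \<in> carrier G"
  obtain k where "order G = p ^ k" using order_prime_power by blast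
  then have "ord x dvd p ^ k" using ord_dvd_group_order[OF x] by simp
  then show ?thesis using prime_p divides_primepow_nat by blast
qed

lemma ord_pos: "x \<in> carrier G \<Longrightarrow> ord x > 0"
  using ord_ge_1[OF finite_carrier] by fastforce

lemma ord_pow_ord_div_p:
  assumes x: "x \<in> carrier G" and x1: "x \<noteq> \<one>"
  shows "p dvd ord x" and "ord (x [^] (ord x div p)) = p"
proof -
  obtain e where e: "ord x = p ^ e" using ord_prime_power[OF x] by blast
  have "e \<noteq> 0" using e x1 ord_eq_1[OF x] by auto
  then obtain e' where e': "e = Suc e'" by (cases e) auto
  then show "p dvd ord x" using e by simp
  have "ord x div p = p ^ e'" using e e' one_less_p by simp
  moreover have "ord (x [^] (p ^ e')) = p"
    using ord_pow[OF x, of "p ^ e'"] e e' one_less_p by simp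
  ultimately show "ord (x [^] (ord x div p)) = p" by simp
qed

lemma ord_eq_p_iff:
  assumes "x \<in> carrier G" "x \<noteq> \<one>"
  shows "ord x = p \<longleftrightarrow> x [^] p = \<one>"
  using assms pow_eq_id[of x p] ord_eq_1[of x] prime_p prime_nat_iff by auto

lemma prime_dvd_if_ord_pow_ne:
  assumes x: "x \<in> carrier G" and ne: "ord (x [^] t) \<noteq> ord x"
  shows "p dvd t"
proof (rule ccontr)
  assume "\<not> p dvd t"
  then have "t \<noteq> 0" and "coprime p t" using prime_p prime_imp_coprime by (auto intro: gr0I)
  moreover obtain e where "ord x = p ^ e" using ord_prime_power[OF x] by blast
  ultimately have "ord (x [^] t) = ord x" using ord_pow_gen[OF x] by simp
  then show False using ne by simp
qed

lemma exists_central_element: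
  assumes "order G \<noteq> 1"
  shows "\<exists>w \<in> carrier G. w \<noteq> \<one> \<and> (\<forall>y \<in> carrier G. w \<otimes> y = y \<otimes> w)"
proof -
  obtain k where k: "order G = p ^ k" using order_prime_power by blast
  interpret conj: group_action G "carrier G" "\<lambda>g. \<lambda>h\<in>carrier G. g \<otimes> h \<otimes> inv g"
    by (rule action_by_conjugation)
  have "p dvd card (carrier G)"
    using k assms by (cases k) (auto simp: order_def)
  then obtain w where w: "w \<in> carrier G" "w \<noteq> \<one>"
    and fixed: "\<forall>y \<in> carrier G. y \<otimes> w \<otimes> inv y = w"
    using conj.exists_other_fixed_point[OF finite_carrier prime_p k, of \<one>] by auto
  have "w \<otimes> y = y \<otimes> w" if y: "y \<in> carrier G" for y
  proof -
    have "y \<otimes> w \<otimes> inv y \<otimes> y = w \<otimes> y" using fixed y by simp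
    then show ?thesis using y w by (simp add: m_assoc)
  qed
  then show ?thesis using w by blast
qed

text \<open>Normalizers grow: a proper subgroup \<open>H\<close> acts on its right cosets, whose number is
  divisible by \<open>p\<close>, so besides \<open>H\<close> itself some coset \<open>H a\<close> is fixed, and then \<open>a \<notin> H\<close>
  normalizes \<open>H\<close>.\<close>

lemma normalizer_grows:
  assumes H: "subgroup H G" and proper: "H \<noteq> carrier G"
  shows "\<exists>g \<in> carrier G - H. \<forall>x \<in> H. inv g \<otimes> x \<otimes> g \<in> H"
proof -
  interpret H: subgroup H G by (rule H)
  interpret act: group_action "G\<lparr>carrier := H\<rparr>" "rcosets H" "\<lambda>h. restrict (\<lambda>Y. Y #> inv h) (rcosets H)"
    by (rule rcoset_action[OF H])
  obtain k where k: "order G = p ^ k" using order_prime_power by blast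
  have "card H dvd p ^ k"
    using lagrange[OF H] k by (metis dvd_triv_right)
  then obtain j where j: "card H = p ^ j" using prime_p divides_primepow_nat by blast
  have "card H < order G"
    using finite_carrier H.subset proper unfolding order_def by (meson psubsetI psubset_card_mono)
  then have "j < k" using j k one_less_p power_less_imp_less_exp by metis
  have "card (rcosets H) * p ^ j = p ^ (k - j) * p ^ j"
    using lagrange[OF H] j k \<open>j < k\<close> by (simp flip: power_add)
  then have "p dvd card (rcosets H)" using one_less_p \<open>j < k\<close> by simp
  moreover have "finite (rcosets H)"
  proof -
    have "rcosets H \<subseteq> Pow (carrier G)" using H.rcosets_carrier[OF is_group] by blast
    then show ?thesis using finite_carrier finite_subset by blast
  qed
  moreover have "H \<in> rcosets H" using H.subset by (metis coset_mult_one one_closed rcosetsI)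
  moreover have "order (G\<lparr>carrier := H\<rparr>) = p ^ j" using j by (simp add: order_def)
  ultimately obtain Y where Y: "Y \<in> rcosets H" "Y \<noteq> H"
    and fixed: "\<forall>h \<in> H. Y #> inv h = Y"
    using act.exists_other_fixed_point[OF _ prime_p, of j H] H.rcos_const by auto
  then obtain a where a: "a \<in> carrier G" "Y = H #> a" unfolding RCOSETS_def by blast
  have "a \<notin> H" using a Y(2) H.rcos_const by blast
  then have "inv a \<in> carrier G - H" using a by (metis DiffI H.m_inv_closed inv_closed inv_inv)
  moreover have "\<forall>x \<in> H. inv (inv a) \<otimes> x \<otimes> inv a \<in> H"
    using fixed_rcoset_normalizes[OF H a(1)] fixed a by simp
  ultimately show ?thesis by blast
qed

lemma order_p_subgroup_of_cyclic_unique: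
  assumes x: "x \<in> carrier G" and y: "y \<in> generate G {x}" and oy: "ord y = p"
  shows "generate G {y} = generate G {x [^] (ord x div p)}"
proof -
  define c where "c = x [^] (ord x div p)"
  have yc: "y \<in> carrier G" using y generate_singleton_subset[OF x] by blast
  have cc: "c \<in> carrier G" using x by (simp add: c_def)
  have "x \<noteq> \<one>" using y oy one_less_p generate_one by auto
  then have pdvd: "p dvd ord x" and oc: "ord c = p"
    using ord_pow_ord_div_p[OF x] by (auto simp: c_def)
  obtain i :: int where i: "y = x [^] i" using in_generate_singleton_int_pow[OF x y] by blast
  have "(x [^] i) [^] (int p) = \<one>"
    using pow_ord_eq_1[OF yc] oy i by (simp add: int_pow_int)
  then have "x [^] (i * int p) = \<one>" using x by (simp add: int_pow_pow)
  then obtain t where "i * int p = int (ord x) * t"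
    using int_pow_eq_id[OF x] by (metis dvd_def)
  moreover have "int (ord x) = int (ord x div p) * int p" using pdvd by (metis dvd_div_mult_self of_nat_mult)
  ultimately have "i = int (ord x div p) * t" using one_less_p by (simp add: algebra_simps)
  then have "y = c [^] t" using i x by (simp add: c_def int_pow_int[symmetric] int_pow_pow)
  then have "generate G {y} \<subseteq> generate G {c}"
    using generate_singleton_mono[OF cc] int_pow_in_generate[OF cc] by blast
  then show ?thesis
    using generate_singleton_eq_if_ord_eq[OF finite_carrier cc yc] oy oc by (simp add: c_def)
qed

lemma exists_max_ord: "\<exists>a \<in> carrier G. \<forall>y \<in> carrier G. ord y \<le> ord a"
proof -
  have fin: "finite (ord ` carrier G)" using finite_carrier by simp
  obtain a where a: "a \<in> carrier G" "ord a = Max (ord ` carrier G)"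
    using Max_in[OF fin] one_closed by (metis empty_iff image_empty image_iff)
  have "\<forall>y \<in> carrier G. ord y \<le> ord a" using a(2) Max_ge[OF fin] by simp
  then show ?thesis using a(1) by blast
qed

text \<open>Among the elements outside \<open>\<langle>a\<rangle>\<close> normalizing \<open>\<langle>a\<rangle>\<close>, which exist as normalizers grow,
  one of least order has its \<open>p\<close>-th power inside \<open>\<langle>a\<rangle>\<close>.\<close>

lemma exists_normalizing_with_pow_in:
  assumes a: "a \<in> carrier G" and proper: "generate G {a} \<noteq> carrier G"
  shows "\<exists>g \<in> carrier G. g \<notin> generate G {a} \<and> inv g \<otimes> a \<otimes> g \<in> generate G {a}
                         \<and> g [^] p \<in> generate G {a}"
proof -
  define H where "H = generate G {a}"
  define P where "P = (\<lambda>n. \<exists>k \<in> carrier G. k \<notin> H \<and> inv k \<otimes> a \<otimes> k \<in> H \<and> ord k = n)"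
  obtain g0 where "g0 \<in> carrier G - H" "\<forall>x \<in> H. inv g0 \<otimes> x \<otimes> g0 \<in> H"
    using normalizer_grows[OF generate_singleton_subgroup[OF a]] proper by (auto simp: H_def)
  then have "P (ord g0)" using self_in_generate[OF a] by (auto simp: P_def H_def)
  then have "P (LEAST n. P n)" by (rule LeastI)
  then obtain g where g: "g \<in> carrier G" "g \<notin> H" "inv g \<otimes> a \<otimes> g \<in> H"
    and g_least: "ord g = (LEAST n. P n)" unfolding P_def by blast
  obtain r :: int where r: "inv g \<otimes> a \<otimes> g = a [^] r"
    using in_generate_singleton_int_pow[OF a] g(3) by (auto simp: H_def)
  have "g \<noteq> \<one>" using g(2) generate.one by (auto simp: H_def)
  then have "ord (g [^] p) < ord g"
    using ord_pow[OF g(1) ord_pow_ord_div_p(1)] ord_pos[OF g(1)] one_less_p g(1) by simp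
  moreover have "inv (g [^] p) \<otimes> a \<otimes> g [^] p \<in> H"
    using conj_iterate[OF g(1) a r] int_pow_in_generate[OF a] by (simp add: H_def)
  ultimately have "g [^] p \<in> H"
    using Least_le[of P "ord (g [^] p)"] g(1) g_least unfolding P_def by fastforce
  then show ?thesis using g by (auto simp: H_def)
qed

end

section \<open>Dicyclic groups\<close>

text \<open>For \<open>h\<close> a power of \<open>2\<close> these relations present the generalized quaternion group.\<close>

locale dicyclic = group G for G (structure) + fixes a g and h :: nat
  assumes a_carrier: "a \<in> carrier G" and g_carrier: "g \<in> carrier G"
    and conj_a: "inv g \<otimes> a \<otimes> g = inv a"
    and g_pow_two: "g [^] (2::nat) = a [^] h" and a_pow_2h: "a [^] (2 * h) = \<one>"
begin

definition Q where "Q = {a [^] (i::int) | i. True} \<union> {a [^] (i::int) \<otimes> g | i. True}"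

lemma a_int_pow_closed [simp]: "a [^] (i::int) \<in> carrier G" using a_carrier by simp

lemma g_square: "g \<otimes> g = a [^] (int h)" using g_pow_two g_carrier by (simp add: numeral_2_eq_2 int_pow_int)

lemma a_pow_double_h: "a [^] (2 * int h) = \<one>" using a_pow_2h by (metis int_pow_int of_nat_mult of_nat_numeral)

lemma g_int_pow_swap: "g \<otimes> a [^] (i::int) = a [^] (- i) \<otimes> g"
proof -
  have "inv g \<otimes> a [^] (- i) \<otimes> g = (inv g \<otimes> a \<otimes> g) [^] (- i)" using conj_int_pow[OF g_carrier a_carrier] by simp
  also have "\<dots> = a [^] i" using conj_a a_carrier by (simp add: int_pow_inv int_pow_neg)
  finally have e: "inv g \<otimes> a [^] (- i) \<otimes> g = a [^] i" .
  have "g \<otimes> a [^] i = g \<otimes> (inv g \<otimes> a [^] (- i) \<otimes> g)" using e by simp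
  also have "\<dots> = a [^] (- i) \<otimes> g" using g_carrier a_carrier by (simp add: m_assoc)
  finally show ?thesis .
qed

lemma mem_Q: "x \<in> Q \<longleftrightarrow> (\<exists>i. x = a [^] (i::int)) \<or> (\<exists>i. x = a [^] (i::int) \<otimes> g)"
  unfolding Q_def by blast

lemma coset_mult_int_pow: "(a [^] (i::int) \<otimes> g) \<otimes> a [^] (j::int) = a [^] (i - j) \<otimes> g"
proof -
  have "(a [^] i \<otimes> g) \<otimes> a [^] j = a [^] i \<otimes> (g \<otimes> a [^] j)" using g_carrier by (simp add: m_assoc)
  also have "\<dots> = a [^] i \<otimes> a [^] (- j) \<otimes> g" using g_carrier by (simp add: g_int_pow_swap m_assoc)
  also have "\<dots> = a [^] (i - j) \<otimes> g" by (simp add: int_pow_mult[OF a_carrier, symmetric])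
  finally show ?thesis .
qed

lemma coset_mult_coset: "(a [^] (i::int) \<otimes> g) \<otimes> (a [^] (j::int) \<otimes> g) = a [^] (i - j + int h)"
proof -
  have "(a [^] i \<otimes> g) \<otimes> (a [^] j \<otimes> g) = ((a [^] i \<otimes> g) \<otimes> a [^] j) \<otimes> g"
    using g_carrier by (simp add: m_assoc)
  also have "\<dots> = a [^] (i - j) \<otimes> (g \<otimes> g)" using g_carrier by (simp add: coset_mult_int_pow m_assoc)
  also have "\<dots> = a [^] (i - j + int h)" by (simp add: g_square int_pow_mult[OF a_carrier])
  finally show ?thesis .
qed

lemma Q_subgroup: "subgroup Q G"
proof (rule subgroupI)
  show "Q \<subseteq> carrier G" unfolding Q_def using g_carrier by auto
  show "Q \<noteq> {}" unfolding Q_def by blast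
next
  fix x assume "x \<in> Q"
  then consider i where "x = a [^] (i::int)" | i where "x = a [^] (i::int) \<otimes> g" using mem_Q by blast
  then show "inv x \<in> Q"
  proof cases
    case 1
    then have "inv x = a [^] (- i)" using a_carrier by (simp add: int_pow_neg)
    then show ?thesis using mem_Q by blast
  next
    case 2
    have "i + int h - i + int h = 2 * int h" by simp
    then have "(a [^] (i + int h) \<otimes> g) \<otimes> x = \<one>"
      using 2 coset_mult_coset[of "i + int h" i] a_pow_double_h by simp
    then have "inv x = a [^] (i + int h) \<otimes> g" using 2 g_carrier by (intro inv_equality) auto
    then show ?thesis using mem_Q by blast
  qed
next
  fix x y assume "x \<in> Q" "y \<in> Q"
  then consider i j where "x = a [^] (i::int)" "y = a [^] (j::int)"
    | i j where "x = a [^] (i::int)" "y = a [^] (j::int) \<otimes> g"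
    | i j where "x = a [^] (i::int) \<otimes> g" "y = a [^] (j::int)"
    | i j where "x = a [^] (i::int) \<otimes> g" "y = a [^] (j::int) \<otimes> g"
    using mem_Q by metis
  then show "x \<otimes> y \<in> Q"
  proof cases
    case 1
    then have "x \<otimes> y = a [^] (i + j)" using a_carrier by (simp add: int_pow_mult)
    then show ?thesis using mem_Q by blast
  next
    case 2
    then have "x \<otimes> y = a [^] (i + j) \<otimes> g" using a_carrier g_carrier by (simp add: int_pow_mult m_assoc)
    then show ?thesis using mem_Q by blast
  next
    case 3
    then show ?thesis using mem_Q coset_mult_int_pow by blast
  next
    case 4
    then show ?thesis using mem_Q coset_mult_coset by blast
  qed
qed

lemma Q_subset: "Q \<subseteq> carrier G" using Q_subgroup subgroup.subset by blast

lemma generate_eq_Q: "generate G {a, g} = Q"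
proof
  show "generate G {a, g} \<subseteq> Q"
  proof (rule generate_subgroup_incl[OF _ Q_subgroup])
    have "a = a [^] (1::int)" using a_carrier by simp
    moreover have "g = a [^] (0::int) \<otimes> g" using g_carrier by simp
    ultimately show "{a, g} \<subseteq> Q" using mem_Q by blast
  qed
  show "Q \<subseteq> generate G {a, g}"
  proof
    fix x assume "x \<in> Q"
    have sg: "subgroup (generate G {a, g}) G" using a_carrier g_carrier by (intro generate_is_subgroup) auto
    have aa: "a \<in> generate G {a, g}" and ga: "g \<in> generate G {a, g}" by (auto intro: generate.incl)
    have "a [^] (i::int) \<in> generate G {a, g}" for i using subgroup_int_pow_closed[OF sg aa] .
    then show "x \<in> generate G {a, g}" using \<open>x \<in> Q\<close> mem_Q subgroup.m_closed[OF sg] ga by metis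
  qed
qed

lemma Q_eq_union: "Q = generate G {a} \<union> (\<lambda>x. x \<otimes> g) ` generate G {a}"
  unfolding Q_def generate_pow[OF a_carrier] by blast

lemma card_Q_le:
  assumes fin: "finite (carrier G)"
  shows "card Q \<le> 2 * ord a"
proof -
  have fA: "finite (generate G {a})" using fin generate_singleton_subset[OF a_carrier] finite_subset by blast
  have "card Q \<le> card (generate G {a}) + card ((\<lambda>x. x \<otimes> g) ` generate G {a})"
    unfolding Q_eq_union by (rule card_Un_le)
  also have "\<dots> \<le> card (generate G {a}) + card (generate G {a})" using card_image_le[OF fA] by simp
  finally show ?thesis using card_generate_singleton[OF a_carrier] by simp
qed

lemma card_Q_eq:
  assumes fin: "finite (carrier G)" and gA: "g \<notin> generate G {a}"
  shows "card Q = 2 * ord a"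
proof -
  have fA: "finite (generate G {a})" using fin generate_singleton_subset[OF a_carrier] finite_subset by blast
  have inj: "inj_on (\<lambda>x. x \<otimes> g) (generate G {a})"
    using generate_singleton_subset[OF a_carrier] g_carrier by (intro inj_onI) (metis subsetD r_cancel)
  have disj: "generate G {a} \<inter> (\<lambda>x. x \<otimes> g) ` generate G {a} = {}"
  proof (rule ccontr)
    assume "\<not> ?thesis"
    then obtain x where x: "x \<in> generate G {a}" "x \<otimes> g \<in> generate G {a}" by blast
    have xc: "x \<in> carrier G" using x generate_singleton_subset[OF a_carrier] by blast
    have "g = inv x \<otimes> (x \<otimes> g)" using xc g_carrier by simp
    moreover have "inv x \<in> generate G {a}" using x subgroup.m_inv_closed[OF generate_singleton_subgroup[OF a_carrier]] by blast
    ultimately have "g \<in> generate G {a}" using x subgroup.m_closed[OF generate_singleton_subgroup[OF a_carrier]] by metis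
    then show False using gA by simp
  qed
  have "card Q = card (generate G {a}) + card ((\<lambda>x. x \<otimes> g) ` generate G {a})"
    unfolding Q_eq_union using fA disj by (simp add: card_Un_disjoint)
  also have "\<dots> = 2 * ord a" using card_image[OF inj] card_generate_singleton[OF a_carrier] by simp
  finally show ?thesis .
qed

lemma conj_coset_element: "inv (a [^] (i::int) \<otimes> g) \<otimes> a \<otimes> (a [^] i \<otimes> g) = inv a"
proof -
  have "a \<otimes> a [^] i = a [^] i \<otimes> a"
    using a_carrier int_pow_mult[OF a_carrier, of i 1] int_pow_mult[OF a_carrier, of 1 i]
    by (simp add: add.commute)
  then have "inv (a [^] i) \<otimes> a \<otimes> a [^] i = a"
    using a_carrier by (simp add: m_assoc)
  moreover have "inv (a [^] i \<otimes> g) \<otimes> a \<otimes> (a [^] i \<otimes> g)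
                 = inv g \<otimes> (inv (a [^] i) \<otimes> a \<otimes> a [^] i) \<otimes> g"
    using a_carrier g_carrier by (simp add: inv_mult_group m_assoc)
  ultimately show ?thesis using conj_a by simp
qed

lemma square_eq_one_in_generate:
  assumes ord_a: "ord a = 2 * h" and "h > 0" and y: "y \<in> Q" and yy: "y \<otimes> y = \<one>"
  shows "y \<in> generate G {a [^] h}"
proof -
  have "\<not> ord a dvd h" using ord_a \<open>h > 0\<close> by (auto dest: dvd_imp_le)
  then have "a [^] (int h) \<noteq> \<one>" using pow_eq_id[OF a_carrier] by (simp add: int_pow_int)
  then have "y \<noteq> a [^] (j::int) \<otimes> g" for j
    using yy coset_mult_coset[of j j] by auto
  then obtain i where i: "y = a [^] (i::int)" using y mem_Q by blast
  have "a [^] (i + i) = y \<otimes> y" unfolding i by (rule int_pow_mult[OF a_carrier])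
  then have "a [^] (i + i) = \<one>" using yy by simp
  then have "int (ord a) dvd i + i" using int_pow_eq_id[OF a_carrier] by blast
  moreover have "i + i = 2 * i" "int (ord a) = 2 * int h" using ord_a by simp_all
  ultimately have "2 * int h dvd 2 * i" by simp
  then have "int h dvd i" by (simp only: dvd_mult_cancel_left) simp
  then obtain t where "i = int h * t" by (rule dvdE)
  then have "y = (a [^] h) [^] t" using i a_carrier by (simp add: int_pow_int[symmetric] int_pow_pow)
  then show ?thesis using int_pow_in_generate[of "a [^] h" t] a_carrier by simp
qed

end

section \<open>\<open>p\<close>-groups with a unique subgroup of order \<open>p\<close>\<close>

text \<open>Uniqueness of the subgroup \<open>\<langle>z\<rangle>\<close> of order \<open>p\<close> is stated as: every solution of \<open>y^p = 1\<close>
  lies in \<open>\<langle>z\<rangle>\<close>.\<close>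

locale unique_order_p_subgroup = finite_p_group +
  fixes z
  assumes z_carrier: "z \<in> carrier G" and ord_z: "ord z = p"
    and order_p_in_generate_z: "\<And>y. y \<in> carrier G \<Longrightarrow> y [^] p = \<one> \<Longrightarrow> y \<in> generate G {z}"
begin

lemma z_in_generate:
  assumes x: "x \<in> carrier G" and x1: "x \<noteq> \<one>"
  shows "z \<in> generate G {x}"
proof -
  define y where "y = x [^] (ord x div p)"
  have yx: "y \<in> generate G {x}" and yc: "y \<in> carrier G"
    using nat_pow_in_generate[OF x] x by (auto simp: y_def)
  have oy: "ord y = p" using ord_pow_ord_div_p[OF x x1] by (simp add: y_def)
  then have "y \<in> generate G {z}" using order_p_in_generate_z[OF yc] pow_ord_eq_1[OF yc] by simp
  then have "generate G {y} = generate G {z}"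
    using generate_singleton_eq_if_ord_eq[OF finite_carrier z_carrier yc]
      generate_singleton_mono[OF z_carrier] oy ord_z by simp
  then show ?thesis
    using self_in_generate[OF z_carrier] generate_singleton_mono[OF x yx] by blast
qed

lemma generate_z_subset:
  "x \<in> carrier G \<Longrightarrow> x \<noteq> \<one> \<Longrightarrow> generate G {z} \<subseteq> generate G {x}"
  using z_in_generate generate_singleton_mono by blast

lemma pow_p_ne_one_if_not_in_generate:
  assumes x: "x \<in> carrier G" "x \<noteq> \<one>" and w: "w \<in> carrier G" "w \<notin> generate G {x}"
  shows "w [^] p \<noteq> \<one>"
  using order_p_in_generate_z[OF w(1)] generate_z_subset[OF x] w(2) by blast

text \<open>By induction on \<open>ord y\<close>: \<open>y^p\<close> lies in \<open>\<langle>x\<rangle>\<close>, necessarily as a \<open>p\<close>-th power \<open>x^(p t)\<close>,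
  and then \<open>y x^(-t)\<close> has order dividing \<open>p\<close>, hence lies in \<open>\<langle>z\<rangle> \<subseteq> \<langle>x\<rangle>\<close>.\<close>

lemma commuting_in_generate:
  assumes "x \<in> carrier G" "y \<in> carrier G" "x \<otimes> y = y \<otimes> x" "ord y \<le> ord x"
  shows "y \<in> generate G {x}"
  using assms
proof (induction "ord y" arbitrary: y rule: less_induct)
  case less
  note x = less.prems(1) and y = less.prems(2) and comm = less.prems(3) and le = less.prems(4)
  show ?case
  proof (cases "y = \<one>")
    case True
    then show ?thesis using generate.one by blast
  next
    case False
    have pdvd: "p dvd ord y" using ord_pow_ord_div_p(1)[OF y False] .
    have x1: "x \<noteq> \<one>"
      using le ord_pos[OF y] False ord_eq_1[OF y] by auto
    define y' where "y' = y [^] p"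
    have y'c: "y' \<in> carrier G" using y by (simp add: y'_def)
    have lt: "ord y' < ord y"
      using ord_pow[OF y pdvd] ord_pos[OF y] one_less_p by (simp add: y'_def)
    have "x \<otimes> y' = y' \<otimes> x"
      unfolding y'_def by (rule group_commutes_pow[OF comm[symmetric] y x, symmetric])
    then have "y' \<in> generate G {x}" using less.hyps[OF lt x y'c] lt le by simp
    then obtain t :: nat where t: "y' = x [^] t"
      using generate_pow_nat[OF x] ord_pos[OF x] by auto
    have "p dvd t" using prime_dvd_if_ord_pow_ne[OF x] t lt le by fastforce
    then obtain t' where t': "t = p * t'" by blast
    define w where "w = y \<otimes> inv (x [^] t')"
    have xt: "x [^] t' \<in> carrier G" using x by simp
    have "y \<otimes> x [^] t' = x [^] t' \<otimes> y" by (rule group_commutes_pow[OF comm x y, symmetric])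
    then have "y \<otimes> inv (x [^] t') = inv (x [^] t') \<otimes> y" using commutes_inv[OF y xt] by blast
    then have "w [^] p = y' \<otimes> inv (x [^] t)"
      using pow_mult_distrib y xt x t'
      by (simp add: w_def y'_def nat_pow_inv nat_pow_pow mult.commute[of p t'])
    then have "w [^] p = \<one>" using t x by simp
    moreover have "w \<in> carrier G" using y xt by (simp add: w_def)
    ultimately have "w \<in> generate G {x}"
      using pow_p_ne_one_if_not_in_generate[OF x x1] by blast
    moreover have "y = w \<otimes> x [^] t'" using y xt by (simp add: w_def m_assoc)
    ultimately show ?thesis
      using nat_pow_in_generate[OF x] subgroup.m_closed[OF generate_singleton_subgroup[OF x]] by simp
  qed
qed

text \<open>If \<open>\<langle>a\<rangle>\<close> has maximal order and \<open>g \<notin> \<langle>a\<rangle>\<close> normalizes it with \<open>g^p \<in> \<langle>a\<rangle>\<close>, then no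
  \<open>g a^j\<close> has order \<open>p\<close> (it would lie in \<open>\<langle>z\<rangle> \<subseteq> \<langle>a\<rangle>\<close>) and \<open>g\<close> does not centralize \<open>a\<close>;
  the arithmetic of \<open>cyclic_extension_congruences\<close> then yields the quaternion relations.\<close>

lemma quaternion_relations:
  assumes a: "a \<in> carrier G" and a_max: "\<And>y. y \<in> carrier G \<Longrightarrow> ord y \<le> ord a" and a1: "a \<noteq> \<one>"
    and g: "g \<in> carrier G" and gA: "g \<notin> generate G {a}"
    and r: "inv g \<otimes> a \<otimes> g = a [^] (r::int)" and s: "g [^] p = a [^] (s::int)"
  shows "p = 2 \<and> (\<exists>m \<ge> 2. ord a = 2 ^ m \<and> inv g \<otimes> a \<otimes> g = inv a
                             \<and> g [^] (2::nat) = a [^] ((2::nat) ^ (m - 1)))"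
proof -
  obtain m where m: "ord a = p ^ m" using ord_prime_power[OF a] by blast
  have m1: "m \<ge> 1" using m a1 ord_eq_1[OF a] by (cases m) auto
  have oa: "int (ord a) = int p ^ m" using m by simp
  have r1: "\<not> int p ^ m dvd r - 1"
  proof
    assume "int p ^ m dvd r - 1"
    then have "a [^] r = a [^] (1::int)"
      using int_pow_eq[OF a] oa dvd_diff_commute by metis
    then have "a \<otimes> g = g \<otimes> a" using r a g by (metis int_pow_1 inv_solve_left' m_assoc m_closed inv_closed)
    then have "g \<in> generate G {a}" using commuting_in_generate[OF a g] a_max[OF g] by simp
    then show False using gA by simp
  qed
  have no_root: "\<not> int p ^ m dvd s + j * (\<Sum>i<p. r ^ i)" for j
  proof
    assume dvd: "int p ^ m dvd s + j * (\<Sum>i<p. r ^ i)"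
    have "(g \<otimes> a [^] j) [^] p = a [^] (s + j * (\<Sum>i<p. r ^ i))"
      using conj_mult_int_pow_nat_pow[OF g a r] s a by (simp add: int_pow_mult)
    then have "(g \<otimes> a [^] j) [^] p = \<one>" using dvd int_pow_eq_id[OF a] oa by simp
    moreover have "g \<otimes> a [^] j \<notin> generate G {a}"
    proof
      assume "g \<otimes> a [^] j \<in> generate G {a}"
      then have "g \<otimes> a [^] j \<otimes> a [^] (- j) \<in> generate G {a}"
        using int_pow_in_generate[OF a] subgroup.m_closed[OF generate_singleton_subgroup[OF a]] by simp
      then show False using gA g a by (simp add: m_assoc int_pow_mult[symmetric])
    qed
    ultimately show False using pow_p_ne_one_if_not_in_generate[OF a a1] g a by simp
  qed
  have "p = 2 \<and> m \<ge> 2 \<and> 2 ^ m dvd r + 1 \<and> 2 ^ m dvd s - 2 ^ (m - 1)"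
    using cyclic_extension_congruences[OF prime_p m1 _ r1 _ no_root]
      normalizer_congruences[OF g a r s] oa by simp
  then have p2: "p = 2" and m2: "m \<ge> 2"
    and r_inv: "int (ord a) dvd -1 - r" and s_half: "int (ord a) dvd int (2 ^ (m - 1)) - s"
    using oa by (auto simp: dvd_diff_commute simp flip: dvd_minus_iff[of _ "r + 1"])
  have "a [^] r = a [^] (-1::int)" using int_pow_eq[OF a, of r "-1"] r_inv by simp
  then have "a [^] r = inv a" using a by (simp add: int_pow_neg)
  moreover have "a [^] s = a [^] (int (2 ^ (m - 1)))"
    using int_pow_eq[OF a, of s "int (2 ^ (m - 1))"] s_half by blast
  then have "a [^] s = a [^] ((2::nat) ^ (m - 1))" by (metis int_pow_int)
  ultimately show ?thesis using p2 m2 m r s by auto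
qed

end

section \<open>The quaternion case\<close>

text \<open>The situation produced by \<open>quaternion_relations\<close>; what remains is to show \<open>Q = G\<close>.\<close>

locale quaternion_candidate =
  unique_order_p_subgroup G p z + dicyclic G a g "2 ^ (m - 1)"
  for G (structure) and p z a g and m :: nat +
  assumes a_max: "\<And>y. y \<in> carrier G \<Longrightarrow> ord y \<le> ord a"
    and p_eq_2: "p = 2" and two_le_m: "m \<ge> 2" and ord_a: "ord a = 2 ^ m"
    and g_notin: "g \<notin> generate G {a}"
begin

lemma a_ne_one: "a \<noteq> \<one>"
  using ord_a two_le_m ord_eq_1[OF a_carrier] by auto

lemma generate_a_subset_Q: "generate G {a} \<subseteq> Q"
  using Q_eq_union by blast

lemma g_in_Q: "g \<in> Q"
  using mem_Q g_carrier by (metis int_pow_0 l_one)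

lemma conj_square_ne_inv:
  assumes k: "k \<in> carrier G" and r: "inv k \<otimes> a \<otimes> k = a [^] (r::int)"
  shows "inv (k [^] (2::nat)) \<otimes> a \<otimes> k [^] (2::nat) \<noteq> inv a"
proof
  assume "inv (k [^] (2::nat)) \<otimes> a \<otimes> k [^] (2::nat) = inv a"
  then have "a [^] (r\<^sup>2) = a [^] (-1::int)"
    using conj_iterate[OF k a_carrier r, of 2] a_carrier by (simp add: int_pow_neg)
  then have "int (ord a) dvd -1 - r\<^sup>2" using int_pow_eq[OF a_carrier] by simp
  then have "int (ord a) dvd - (r\<^sup>2 + 1)" by (simp add: algebra_simps)
  moreover have "(4::int) dvd int (ord a)"
    using ord_a two_le_m le_imp_power_dvd[of 2 m "2::int"] by simp
  ultimately show False
    using four_not_dvd_square_plus_one dvd_trans by (metis dvd_minus_iff)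
qed

lemma inverting_in_Q:
  assumes k: "k \<in> carrier G" and inverts: "inv k \<otimes> a \<otimes> k = inv a"
  shows "k \<in> Q"
proof -
  define u where "u = g \<otimes> k"
  have uc: "u \<in> carrier G" using g_carrier k by (simp add: u_def)
  have "inv u \<otimes> a \<otimes> u = inv k \<otimes> (inv g \<otimes> a \<otimes> g) \<otimes> k"
    using g_carrier k a_carrier by (simp add: u_def inv_mult_group m_assoc)
  also have "\<dots> = inv (inv k \<otimes> a \<otimes> k)"
    using conj_a k a_carrier by (simp add: inv_mult_group m_assoc)
  finally have "inv u \<otimes> a \<otimes> u = a" using inverts a_carrier by simp
  then have "a \<otimes> u = u \<otimes> a" using uc a_carrier by (metis inv_solve_left' m_assoc m_closed inv_closed)
  then have "u \<in> Q"
    using commuting_in_generate[OF a_carrier uc _ a_max[OF uc]] generate_a_subset_Q by auto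
  moreover have "k = inv g \<otimes> u" using g_carrier k by (simp add: u_def)
  ultimately show ?thesis
    using g_in_Q subgroup.m_inv_closed[OF Q_subgroup] subgroup.m_closed[OF Q_subgroup] by simp
qed

text \<open>By induction on \<open>ord k\<close>: \<open>k\<^sup>2\<close> normalizes \<open>\<langle>a\<rangle>\<close>, hence lies in \<open>Q\<close>, but not in the coset
  \<open>\<langle>a\<rangle> g\<close>, whose elements invert \<open>a\<close>; and \<open>k\<^sup>2 \<in> \<langle>a\<rangle>\<close> with \<open>k \<notin> \<langle>a\<rangle>\<close> makes \<open>k\<close> invert \<open>a\<close>.\<close>

lemma normalizing_in_Q:
  assumes "k \<in> carrier G" "inv k \<otimes> a \<otimes> k \<in> generate G {a}"
  shows "k \<in> Q"
  using assms
proof (induction "ord k" arbitrary: k rule: less_induct)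
  case less
  note k = less.prems(1) and normal = less.prems(2)
  show ?case
  proof (cases "k \<in> generate G {a}")
    case True
    then show ?thesis using generate_a_subset_Q by blast
  next
    case False
    obtain r :: int where r: "inv k \<otimes> a \<otimes> k = a [^] r"
      using in_generate_singleton_int_pow[OF a_carrier normal] by blast
    define k2 where "k2 = k [^] (2::nat)"
    have k2c: "k2 \<in> carrier G" using k by (simp add: k2_def)
    have k2_conj: "inv k2 \<otimes> a \<otimes> k2 = a [^] (r\<^sup>2)"
      unfolding k2_def by (rule conj_iterate[OF k a_carrier r])
    have "k \<noteq> \<one>" using False generate.one by blast
    then have "ord k2 < ord k"
      using ord_pow_ord_div_p(1)[OF k] ord_pow[OF k] ord_pos[OF k] p_eq_2 by (simp add: k2_def)
    then have "k2 \<in> Q"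
      using less.hyps k2c k2_conj int_pow_in_generate[OF a_carrier] by simp
    moreover have "k2 \<notin> (\<lambda>x. x \<otimes> g) ` generate G {a}"
      using conj_square_ne_inv[OF k r] conj_coset_element generate_pow[OF a_carrier]
      by (auto simp: k2_def)
    ultimately obtain i where "k2 = a [^] (i::int)"
      using Q_eq_union generate_pow[OF a_carrier] by auto
    then have "k [^] p = a [^] i" using p_eq_2 by (simp add: k2_def)
    then have "inv k \<otimes> a \<otimes> k = inv a"
      using quaternion_relations[OF a_carrier a_max a_ne_one k False r] by blast
    then show ?thesis using inverting_in_Q[OF k] by blast
  qed
qed

text \<open>For \<open>m \<ge> 3\<close>: an element \<open>h \<notin> Q\<close> normalizing \<open>Q\<close> must map \<open>a\<close> into \<open>\<langle>a\<rangle>\<close>, because all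
  elements of \<open>Q - \<langle>a\<rangle>\<close> have order \<open>4 < ord a\<close>.\<close>

lemma Q_eq_carrier_if_3_le_m:
  assumes "m \<ge> 3"
  shows "Q = carrier G"
proof (rule ccontr)
  assume "Q \<noteq> carrier G"
  then obtain h where h: "h \<in> carrier G - Q" and normal: "\<forall>x\<in>Q. inv h \<otimes> x \<otimes> h \<in> Q"
    using normalizer_grows[OF Q_subgroup] by blast
  have hc: "h \<in> carrier G" using h by blast
  define c where "c = inv h \<otimes> a \<otimes> h"
  have "c \<in> Q" unfolding c_def using normal generate_a_subset_Q self_in_generate[OF a_carrier] by blast
  have "c \<in> generate G {a}"
  proof (rule ccontr)
    assume "c \<notin> generate G {a}"
    then obtain i where "c = a [^] (i::int) \<otimes> g"
      using \<open>c \<in> Q\<close> mem_Q generate_pow[OF a_carrier] by blast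
    then have "c \<otimes> c = a [^] (int (2 ^ (m - 1)))" by (simp add: coset_mult_coset)
    moreover have "c [^] (4::nat) = (c \<otimes> c) \<otimes> (c \<otimes> c)"
      using hc a_carrier by (simp add: c_def numeral_eq_Suc m_assoc)
    moreover have "int (2 ^ (m - 1)) + int (2 ^ (m - 1)) = int (ord a)"
      using ord_a two_le_m by (cases m) auto
    ultimately have "c [^] (4::nat) = \<one>"
      using a_carrier by (simp add: int_pow_mult[symmetric] int_pow_int)
    then have "inv h \<otimes> a [^] (4::nat) \<otimes> h = \<one>" using conj_nat_pow[OF hc a_carrier] by (simp add: c_def)
    moreover have "a [^] (4::nat) = h \<otimes> (inv h \<otimes> a [^] (4::nat) \<otimes> h) \<otimes> inv h"
      using hc a_carrier by (simp add: m_assoc)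
    ultimately have "a [^] (4::nat) = \<one>" using hc by simp
    then have "ord a \<le> 4" using pow_eq_id[OF a_carrier] by (simp add: dvd_imp_le)
    moreover have "(2::nat) ^ m \<ge> 2 ^ 3" using assms by (intro power_increasing) auto
    ultimately show False using ord_a by simp
  qed
  then have "h \<in> Q" using normalizing_in_Q[OF hc] by (simp add: c_def)
  then show False using h by blast
qed

text \<open>For \<open>m = 2\<close> the group has exponent \<open>4\<close> and \<open>a\<^sup>2\<close> is its unique involution; every element
  outside \<open>\<langle>z\<rangle> = {1, a\<^sup>2}\<close> squares to \<open>a\<^sup>2\<close>, so any two such elements with product outside
  \<open>\<langle>z\<rangle>\<close> anticommute modulo \<open>a\<^sup>2\<close>. For \<open>h \<notin> Q\<close> this makes \<open>h a g\<close> commute with \<open>a\<close>.\<close>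

context
  assumes m_eq_2: "m = 2"
begin

lemma pow_four_eq_one:
  assumes x: "x \<in> carrier G"
  shows "x [^] (4::nat) = \<one>"
proof -
  obtain e where e: "ord x = 2 ^ e" using ord_prime_power[OF x] p_eq_2 by blast
  have "(2::nat) ^ e \<le> 2 ^ 2" using a_max[OF x] ord_a m_eq_2 e by simp
  then have "e \<le> 2" by (rule power_le_imp_le_exp[rotated]) simp
  then have "(2::nat) ^ e dvd 2 ^ 2" by (rule le_imp_power_dvd)
  then show ?thesis using pow_eq_id[OF x] e by simp
qed

lemma a_square_square: "a [^] (2::nat) \<otimes> a [^] (2::nat) = \<one>"
  using pow_four_eq_one[OF a_carrier] a_carrier by (simp add: nat_pow_mult)

lemma generate_z_eq: "generate G {z} = {\<one>, a [^] (2::nat)}"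
proof -
  have "a [^] (2::nat) \<noteq> \<one>" using pow_eq_id[OF a_carrier] ord_a m_eq_2 by simp
  moreover have "a [^] (2::nat) \<in> generate G {z}"
    using order_p_in_generate_z a_square_square a_carrier p_eq_2 by (simp add: numeral_2_eq_2)
  moreover have "finite (generate G {z})"
    using finite_carrier generate_singleton_subset[OF z_carrier] finite_subset by blast
  moreover have "card (generate G {z}) = 2"
    using card_generate_singleton[OF z_carrier] ord_z p_eq_2 by simp
  ultimately show ?thesis
    using card_subset_eq[of "generate G {z}" "{\<one>, a [^] (2::nat)}"] generate.one by auto
qed

lemma square_outside_generate_z:
  assumes x: "x \<in> carrier G" and xz: "x \<notin> generate G {z}"
  shows "x \<otimes> x = a [^] (2::nat)"
proof -
  have "(x \<otimes> x) [^] p = \<one>"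
    using pow_four_eq_one[OF x] x p_eq_2 by (simp add: numeral_eq_Suc m_assoc)
  then have "x \<otimes> x \<in> {\<one>, a [^] (2::nat)}" using order_p_in_generate_z[of "x \<otimes> x"] x generate_z_eq by simp
  moreover have "x \<otimes> x \<noteq> \<one>"
    using order_p_in_generate_z[OF x] xz x p_eq_2 by (auto simp: numeral_2_eq_2)
  ultimately show ?thesis by blast
qed

lemma a_square_commutes_outside_generate_z:
  assumes x: "x \<in> carrier G" and xz: "x \<notin> generate G {z}"
  shows "a [^] (2::nat) \<otimes> x = x \<otimes> a [^] (2::nat)"
  using square_outside_generate_z[OF x xz] x by (metis m_assoc)

lemma anticommute_outside_generate_z:
  assumes x: "x \<in> carrier G" and y: "y \<in> carrier G" and xz: "x \<notin> generate G {z}"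
    and yz: "y \<notin> generate G {z}" and xyz: "x \<otimes> y \<notin> generate G {z}"
  shows "y \<otimes> x = x \<otimes> y \<otimes> a [^] (2::nat)"
proof -
  define c where "c = a [^] (2::nat)"
  have c: "c \<in> carrier G" "c \<otimes> c = \<one>" using a_carrier a_square_square by (auto simp: c_def)
  have inv_eq: "inv u = u \<otimes> c" if u: "u \<in> carrier G" "u \<notin> generate G {z}" for u
  proof (rule inv_equality)
    have "u \<otimes> c \<otimes> u = u \<otimes> u \<otimes> c"
      using a_square_commutes_outside_generate_z[OF u] u c by (simp add: c_def m_assoc)
    then show "u \<otimes> c \<otimes> u = \<one>"
      using square_outside_generate_z[OF u] c by (simp add: c_def)
  qed (use u c in auto)
  have "y \<otimes> x = inv x \<otimes> ((x \<otimes> y) \<otimes> (x \<otimes> y)) \<otimes> inv y" using x y by (simp add: m_assoc)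
  also have "\<dots> = (x \<otimes> c) \<otimes> c \<otimes> (y \<otimes> c)"
    using square_outside_generate_z[OF _ xyz] inv_eq[OF x xz] inv_eq[OF y yz] x y by (simp add: c_def)
  also have "\<dots> = x \<otimes> y \<otimes> c" using x y c by (simp add: m_assoc)
  finally show ?thesis by (simp add: c_def)
qed

lemma a_notin_generate_z: "a \<notin> generate G {z}"
proof
  assume "a \<in> generate G {z}"
  then have "a \<otimes> \<one> = a \<otimes> a"
    using generate_z_eq a_ne_one a_carrier by (simp add: numeral_2_eq_2)
  then show False using a_ne_one a_carrier by (metis l_cancel one_closed)
qed

lemma anticommute_with_a:
  assumes u: "u \<in> carrier G" "u \<notin> generate G {a}"
  shows "u \<otimes> a = a \<otimes> u \<otimes> a [^] (2::nat)"
proof -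
  have zA: "generate G {z} \<subseteq> generate G {a}" using generate_z_subset[OF a_carrier a_ne_one] .
  have "a \<otimes> u \<notin> generate G {z}"
  proof
    assume "a \<otimes> u \<in> generate G {z}"
    then have "inv a \<otimes> (a \<otimes> u) \<in> generate G {a}"
      using zA subgroup.m_closed[OF generate_singleton_subgroup[OF a_carrier]]
        subgroup.m_inv_closed[OF generate_singleton_subgroup[OF a_carrier] self_in_generate[OF a_carrier]]
      by blast
    then show False using u a_carrier by simp
  qed
  then show ?thesis
    using anticommute_outside_generate_z[OF a_carrier u(1) a_notin_generate_z] u zA by blast
qed

lemma Q_eq_carrier_if_m_eq_2: "Q = carrier G"
proof (rule ccontr)
  assume "Q \<noteq> carrier G"
  then obtain h where h: "h \<in> carrier G" and hQ: "h \<notin> Q" using Q_subset by blast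
  define c where "c = a [^] (2::nat)"
  have c: "c \<in> carrier G" "c \<otimes> c = \<one>" using a_carrier a_square_square by (auto simp: c_def)
  have ga: "g \<otimes> a = a \<otimes> g \<otimes> c" and ha: "h \<otimes> a = a \<otimes> h \<otimes> c"
    using anticommute_with_a g_carrier g_notin h hQ generate_a_subset_Q by (auto simp: c_def)
  have "g \<notin> generate G {z}"
    using g_notin generate_z_subset[OF a_carrier a_ne_one] by blast
  then have ca: "c \<otimes> a = a \<otimes> c" and cg: "c \<otimes> g = g \<otimes> c"
    using a_square_commutes_outside_generate_z a_carrier g_carrier a_notin_generate_z
    by (auto simp: c_def)
  define w where "w = h \<otimes> a \<otimes> g"
  have "a \<otimes> w = (a \<otimes> h) \<otimes> a \<otimes> g" using h a_carrier g_carrier by (simp add: w_def m_assoc)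
  also have "a \<otimes> h = h \<otimes> a \<otimes> c"
  proof -
    have "h \<otimes> a \<otimes> c = a \<otimes> h \<otimes> (c \<otimes> c)" using ha c h a_carrier by (simp add: m_assoc)
    then show ?thesis using c h a_carrier by simp
  qed
  also have "h \<otimes> a \<otimes> c \<otimes> a \<otimes> g = h \<otimes> a \<otimes> (c \<otimes> a) \<otimes> g"
    using c h a_carrier g_carrier by (simp add: m_assoc)
  also have "\<dots> = h \<otimes> a \<otimes> a \<otimes> (g \<otimes> c)"
    using ca cg c h a_carrier g_carrier by (simp add: m_assoc)
  also have "\<dots> = w \<otimes> a"
    using ga c h a_carrier g_carrier by (simp add: w_def m_assoc)
  finally have "a \<otimes> w = w \<otimes> a" .
  then have "w \<in> Q"
    using commuting_in_generate[OF a_carrier _ _ a_max] generate_a_subset_Q h a_carrier g_carrier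
    by (auto simp: w_def)
  moreover have "h = w \<otimes> inv g \<otimes> inv a" using h a_carrier g_carrier by (simp add: w_def m_assoc)
  moreover have "inv g \<in> Q" and "inv a \<in> Q"
    using g_in_Q generate_a_subset_Q self_in_generate[OF a_carrier]
      subgroup.m_inv_closed[OF Q_subgroup] by auto
  ultimately show False
    using hQ subgroup.m_closed[OF Q_subgroup] by simp
qed

end

lemma Q_eq_carrier: "Q = carrier G"
  using Q_eq_carrier_if_m_eq_2 Q_eq_carrier_if_3_le_m two_le_m by force

lemma is_gen_quaternion: "is_gen_quaternion G (m + 1)"
  unfolding is_gen_quaternion_def
proof (intro conjI bexI)
  show "order G = 2 ^ (m + 1)"
    using card_Q_eq[OF finite_carrier g_notin] Q_eq_carrier ord_a by (simp add: order_def)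
  show "generate G {a, g} = carrier G" using generate_eq_Q Q_eq_carrier by simp
  show "a [^] ((2::nat) ^ (m + 1 - 2)) = g [^] (2::nat)" using g_pow_two two_le_m by simp
  show "a [^] ((2::nat) ^ (m + 1 - 1)) = \<one>" using ord_a pow_ord_eq_1[OF a_carrier] by simp
qed (use two_le_m conj_a a_carrier g_carrier in auto)

end

context unique_order_p_subgroup
begin

theorem cyclic_or_gen_quaternion: "is_cyclic_group G \<or> (\<exists>n. is_gen_quaternion G n)"
proof (cases "is_cyclic_group G")
  case False
  obtain a where a: "a \<in> carrier G" and a_max: "\<forall>y \<in> carrier G. ord y \<le> ord a"
    using exists_max_ord by blast
  have a1: "a \<noteq> \<one>" using a_max z_carrier ord_z one_less_p by fastforce
  obtain g where g: "g \<in> carrier G" "g \<notin> generate G {a}"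
    and "inv g \<otimes> a \<otimes> g \<in> generate G {a}" "g [^] p \<in> generate G {a}"
    using exists_normalizing_with_pow_in[OF a] False a by (auto simp: is_cyclic_group_def)
  then obtain r s :: int where "inv g \<otimes> a \<otimes> g = a [^] r" "g [^] p = a [^] s"
    using in_generate_singleton_int_pow[OF a] by metis
  then obtain m where rel: "p = 2" "m \<ge> 2" "ord a = 2 ^ m"
    "inv g \<otimes> a \<otimes> g = inv a" "g [^] (2::nat) = a [^] ((2::nat) ^ (m - 1))"
    using quaternion_relations[OF a _ a1 g] a_max by blast
  moreover have "(2::nat) * 2 ^ (m - 1) = ord a" using rel by (cases m) auto
  then have "a [^] ((2::nat) * 2 ^ (m - 1)) = \<one>" using pow_ord_eq_1[OF a] by simp
  ultimately interpret quaternion_candidate G p z a g m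
    using a a_max g by unfold_locales auto
  show ?thesis using is_gen_quaternion by blast
qed simp

end

context finite_p_group
begin

lemma cyclic_unique_order_p_subgroup:
  assumes "is_cyclic_group G" and "order G \<noteq> 1"
  shows "\<exists>z. unique_order_p_subgroup G p z"
proof -
  obtain x where x: "x \<in> carrier G" and gen: "generate G {x} = carrier G"
    using assms(1) unfolding is_cyclic_group_def by blast
  have "x \<noteq> \<one>"
  proof
    assume "x = \<one>"
    then have "carrier G = {\<one>}" using gen generate_one by simp
    then show False using assms(2) by (simp add: order_def)
  qed
  define z where "z = x [^] (ord x div p)"
  have z: "z \<in> carrier G" "ord z = p"
    using x ord_pow_ord_div_p[OF x \<open>x \<noteq> \<one>\<close>] by (auto simp: z_def)
  have "y \<in> generate G {z}" if y: "y \<in> carrier G" "y [^] p = \<one>" for y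
  proof (cases "y = \<one>")
    case False
    then have "ord y = p" using ord_eq_p_iff y by blast
    then have "generate G {y} = generate G {z}"
      using order_p_subgroup_of_cyclic_unique[OF x] y gen by (simp add: z_def)
    then show ?thesis using self_in_generate[OF y(1)] by simp
  qed (simp add: generate.one)
  then have "unique_order_p_subgroup G p z"
    using z by unfold_locales auto
  then show ?thesis by blast
qed

lemma gen_quaternion_unique_order_p_subgroup:
  assumes "is_gen_quaternion G n"
  shows "p ^ 2 \<le> order G" and "\<exists>z. unique_order_p_subgroup G p z"
proof -
  obtain a b where n: "n \<ge> 3" and order: "order G = 2 ^ n"
    and a: "a \<in> carrier G" and b: "b \<in> carrier G" and gen: "generate G {a, b} = carrier G"
    and b_square: "a [^] ((2::nat) ^ (n - 2)) = b [^] (2::nat)"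
    and a_pow: "a [^] ((2::nat) ^ (n - 1)) = \<one>" and conj: "inv b \<otimes> a \<otimes> b = inv a"
    using assms unfolding is_gen_quaternion_def by blast
  obtain k where "order G = p ^ k" using order_prime_power by blast
  moreover have "(2::nat) dvd 2 ^ n" using n by simp
  ultimately have "2 dvd p ^ k" using order by simp
  then have "2 dvd p" using prime_dvd_power[of 2 p k] by simp
  then have p2: "p = 2"
    using prime_p prime_nat_iff by (metis numeral_eq_one_iff semiring_norm(85))
  have "(2::nat) ^ 2 \<le> 2 ^ n" using n by (intro power_increasing) auto
  then show "p ^ 2 \<le> order G" using p2 order by simp
  have "n - 1 = Suc (n - 2)" using n by simp
  then have h: "(2::nat) * 2 ^ (n - 2) = 2 ^ (n - 1)" by simp
  interpret dicyclic G a b "2 ^ (n - 2)"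
    using a b conj b_square a_pow h by unfold_locales auto
  have Q: "Q = carrier G" using generate_eq_Q gen by simp
  have "2 ^ n \<le> 2 * ord a" using card_Q_le[OF finite_carrier] Q order by (simp add: order_def)
  moreover have "ord a \<le> 2 ^ (n - 1)" using a_pow pow_eq_id[OF a] by (simp add: dvd_imp_le)
  moreover have "(2::nat) ^ n = 2 * 2 ^ (n - 1)" using n by (cases n) auto
  ultimately have ord_a: "ord a = 2 * 2 ^ (n - 2)" using h by simp
  define z where "z = a [^] ((2::nat) ^ (n - 2))"
  have "ord z = ord a div 2 ^ (n - 2)"
    unfolding z_def using ord_pow[OF a] ord_a by simp
  then have z: "z \<in> carrier G" "ord z = p" using a ord_a p2 by (simp_all add: z_def)
  have "y \<in> generate G {z}" if y: "y \<in> carrier G" "y [^] p = \<one>" for y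
  proof -
    have "y \<otimes> y = \<one>" using y p2 by (simp add: numeral_2_eq_2)
    then show ?thesis
      using square_eq_one_in_generate[OF ord_a _ _] y(1) Q by (simp add: z_def)
  qed
  then have "unique_order_p_subgroup G p z"
    using z by unfold_locales auto
  then show "\<exists>z. unique_order_p_subgroup G p z" by blast
qed

end

section \<open>Breaking points\<close>

definition breaking_point :: "('a, 'b) monoid_scheme \<Rightarrow> 'a \<Rightarrow> bool" where
  "breaking_point G x \<longleftrightarrow> x \<in> carrier G \<and>
     generate G {x} \<noteq> {\<one>\<^bsub>G\<^esub>} \<and> generate G {x} \<noteq> carrier G \<and>
     (\<forall>y \<in> carrier G. cls_le G (generate G {y}) (generate G {x})
                     \<or> cls_le G (generate G {x}) (generate G {y}))"

lemma has_breaking_point_iff: "has_breaking_point G \<longleftrightarrow> (\<exists>x. breaking_point G x)"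
  unfolding has_breaking_point_def breaking_point_def by blast

context unique_order_p_subgroup
begin

lemma breaking_point_z:
  assumes "order G \<noteq> p"
  shows "breaking_point G z"
  unfolding breaking_point_def
proof (intro conjI ballI)
  show "z \<in> carrier G" by (rule z_carrier)
  show "generate G {z} \<noteq> {\<one>}"
    using self_in_generate[OF z_carrier] ord_z one_less_p ord_eq_1[OF z_carrier] by auto
  show "generate G {z} \<noteq> carrier G"
    using card_generate_singleton[OF z_carrier] ord_z assms by (auto simp: order_def)
  fix y assume y: "y \<in> carrier G"
  show "cls_le G (generate G {y}) (generate G {z}) \<or> cls_le G (generate G {z}) (generate G {y})"
  proof (cases "y = \<one>")
    case True
    then have "generate G {y} \<subseteq> generate G {z}" using generate_one generate.one by auto
    then show ?thesis using cls_le_of_subset generate_singleton_subset[OF z_carrier] by blast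
  next
    case False
    then have "generate G {z} \<subseteq> generate G {y}"
      using z_in_generate[OF y] generate_singleton_mono[OF y] by blast
    then show ?thesis using cls_le_of_subset generate_singleton_subset[OF y] by blast
  qed
qed

end

context finite_p_group
begin

lemma breaking_point_order:
  assumes "breaking_point G x"
  shows "p ^ 2 \<le> order G"
proof -
  have x: "x \<in> carrier G" and nontrivial: "generate G {x} \<noteq> {\<one>}"
    and proper: "generate G {x} \<noteq> carrier G"
    using assms by (auto simp: breaking_point_def)
  obtain k where k: "order G = p ^ k" using order_prime_power by blast
  obtain e where e: "ord x = p ^ e" using ord_prime_power[OF x] by blast
  have "e \<noteq> 0" using e nontrivial generate_one ord_eq_1[OF x] by auto
  have "card (generate G {x}) < card (carrier G)"
    using generate_singleton_subset[OF x] proper finite_carrier by (meson psubsetI psubset_card_mono)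
  then have "p ^ e < p ^ k" using card_generate_singleton[OF x] e k by (simp add: order_def)
  then have "e < k" using one_less_p power_less_imp_less_exp by blast
  then have "p ^ 2 \<le> p ^ k" using \<open>e \<noteq> 0\<close> one_less_p by (intro power_increasing) auto
  then show ?thesis using k by simp
qed

lemma central_order_p_in_breaking_point:
  assumes bp: "breaking_point G x" and u: "u \<in> carrier G" "ord u = p"
    and central: "\<forall>y \<in> carrier G. u \<otimes> y = y \<otimes> u"
  shows "u \<in> generate G {x}"
proof -
  have x: "x \<in> carrier G" and x1: "x \<noteq> \<one>"
    using bp generate_one unfolding breaking_point_def by auto
  from bp u consider (below) g where "g \<in> carrier G" "generate G {u} \<subseteq> conj_set G g (generate G {x})"
    | (above) g where "g \<in> carrier G" "generate G {x} \<subseteq> conj_set G g (generate G {u})"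
    unfolding breaking_point_def cls_le_def by blast
  then show ?thesis
  proof cases
    case below
    then show ?thesis
      using central_mem_conj_set[OF _ generate_singleton_subset[OF x] central]
        self_in_generate[OF u(1)] by blast
  next
    case above
    then have sub: "generate G {x} \<subseteq> generate G {u}"
      using conj_set_central[OF _ generate_singleton_subset[OF u(1)]
          generate_central[OF u(1) central]] by simp
    have "finite (generate G {u})"
      using finite_carrier generate_singleton_subset[OF u(1)] finite_subset by blast
    then have "ord x \<le> p"
      using card_mono[OF _ sub] card_generate_singleton x u by simp
    moreover have "p \<le> ord x"
      using ord_pow_ord_div_p(1)[OF x x1] ord_pos[OF x] by (simp add: dvd_imp_le)
    ultimately have "generate G {x} = generate G {u}"
      using generate_singleton_eq_if_ord_eq[OF finite_carrier u(1) x sub] u by simp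
    then show ?thesis using self_in_generate[OF u(1)] by simp
  qed
qed

text \<open>A subgroup \<open>\<langle>y\<rangle>\<close> of order \<open>p\<close> below the breaking point \<open>\<langle>x\<rangle>\<close> is conjugate to the unique
  subgroup of order \<open>p\<close> of \<open>\<langle>x\<rangle>\<close>, which is the central \<open>\<langle>z\<rangle>\<close>; one above it contains \<open>z\<close>.\<close>

lemma order_p_in_generate_of_breaking_point:
  assumes bp: "breaking_point G x" and z: "z \<in> carrier G" "ord z = p"
    and central: "\<forall>y \<in> carrier G. z \<otimes> y = y \<otimes> z"
    and y: "y \<in> carrier G" "ord y = p"
  shows "y \<in> generate G {z}"
proof -
  have x: "x \<in> carrier G" using bp by (simp add: breaking_point_def)
  have zx: "z \<in> generate G {x}" using central_order_p_in_breaking_point[OF bp z central] .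
  from bp y consider (below) g where "g \<in> carrier G" "generate G {y} \<subseteq> conj_set G g (generate G {x})"
    | (above) g where "g \<in> carrier G" "generate G {x} \<subseteq> conj_set G g (generate G {y})"
    unfolding breaking_point_def cls_le_def by blast
  then show ?thesis
  proof cases
    case below
    then obtain k where k: "k \<in> generate G {x}" "y = g \<otimes> k \<otimes> inv g"
      using self_in_generate[OF y(1)] mem_conj_set by blast
    have kc: "k \<in> carrier G" using k(1) generate_singleton_subset[OF x] by blast
    have "k = inv g \<otimes> y \<otimes> g" using k below(1) kc by (simp add: m_assoc)
    then have "k [^] p = \<one>" and "k \<noteq> \<one>"
      using conj_nat_pow[OF below(1) y(1)] y below(1) one_less_p ord_eq_1[OF y(1)]
      by (auto simp: k(2))
    then have "generate G {k} = generate G {z}"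
      using order_p_subgroup_of_cyclic_unique[OF x] k(1) zx z(2) ord_eq_p_iff[OF kc] by simp
    then have "k \<in> generate G {z}" using self_in_generate[OF kc] by simp
    then have "\<forall>y \<in> carrier G. k \<otimes> y = y \<otimes> k"
      using generate_central[OF z(1) central] by blast
    then have "g \<otimes> k \<otimes> inv g = k" using below(1) kc by (simp add: m_assoc)
    then show ?thesis using k(2) \<open>k \<in> generate G {z}\<close> by simp
  next
    case above
    then have "z \<in> generate G {y}"
      using zx central_mem_conj_set[OF above(1) generate_singleton_subset[OF y(1)] central] by blast
    then have "generate G {z} = generate G {y}"
      using generate_singleton_eq_if_ord_eq[OF finite_carrier y(1) z(1)]
        generate_singleton_mono[OF y(1)] y z by simp
    then show ?thesis using self_in_generate[OF y(1)] by simp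
  qed
qed

lemma breaking_point_imp_unique_order_p_subgroup:
  assumes bp: "breaking_point G x"
  shows "\<exists>z. unique_order_p_subgroup G p z"
proof -
  have "x \<in> carrier G" "x \<noteq> \<one>" using bp generate_one unfolding breaking_point_def by auto
  have "order G \<noteq> 1"
  proof
    assume "order G = 1"
    then have "carrier G = {\<one>}" using order_one_triv_iff by blast
    then show False using \<open>x \<in> carrier G\<close> \<open>x \<noteq> \<one>\<close> by blast
  qed
  then obtain w where w: "w \<in> carrier G" "w \<noteq> \<one>"
    and central_w: "\<forall>y \<in> carrier G. w \<otimes> y = y \<otimes> w"
    using exists_central_element by blast
  define z where "z = w [^] (ord w div p)"
  have z: "z \<in> carrier G" "ord z = p"
    using w ord_pow_ord_div_p[OF w] by (auto simp: z_def)
  have central: "\<forall>y \<in> carrier G. z \<otimes> y = y \<otimes> z"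
    using generate_central[OF w(1) central_w] nat_pow_in_generate[OF w(1)] by (simp add: z_def)
  have "y \<in> generate G {z}" if y: "y \<in> carrier G" "y [^] p = \<one>" for y
  proof (cases "y = \<one>")
    case False
    then have "ord y = p" using ord_eq_p_iff[OF y(1)] y(2) by simp
    then show ?thesis using order_p_in_generate_of_breaking_point[OF bp z central y(1)] by blast
  qed (simp add: generate.one)
  then have "unique_order_p_subgroup G p z"
    using z by unfold_locales auto
  then show ?thesis by blast
qed

theorem has_breaking_point_iff_unique_order_p_subgroup:
  "has_breaking_point G \<longleftrightarrow> (\<exists>z. unique_order_p_subgroup G p z) \<and> p ^ 2 \<le> order G"
proof
  assume "has_breaking_point G"
  then obtain x where "breaking_point G x" unfolding has_breaking_point_iff by blast
  then show "(\<exists>z. unique_order_p_subgroup G p z) \<and> p ^ 2 \<le> order G"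
    using breaking_point_imp_unique_order_p_subgroup breaking_point_order by blast
next
  assume "(\<exists>z. unique_order_p_subgroup G p z) \<and> p ^ 2 \<le> order G"
  then obtain z where z: "unique_order_p_subgroup G p z" and le: "p ^ 2 \<le> order G" by blast
  interpret unique_order_p_subgroup G p z by (rule z)
  have "p < p ^ 2" using one_less_p by (simp add: power2_eq_square)
  then have "order G \<noteq> p" using le by simp
  then show "has_breaking_point G" unfolding has_breaking_point_iff using breaking_point_z by blast
qed

end

theorem mainTheorem5:
  fixes G :: "('a, 'b) monoid_scheme" and p :: nat
  assumes "group G" and "finite (carrier G)" and "Factorial_Ring.prime p"
    and "\<exists>k. order G = p ^ k"
  shows "has_breaking_point G \<longleftrightarrow>
           ((is_cyclic_group G \<and> order G \<ge> p ^ 2) \<or> (\<exists>n. is_gen_quaternion G n))"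
proof -
  interpret finite_p_group G p
    using assms by (simp add: finite_p_group_def finite_p_group_axioms_def)
  show ?thesis
    unfolding has_breaking_point_iff_unique_order_p_subgroup
  proof
    assume "(\<exists>z. unique_order_p_subgroup G p z) \<and> p ^ 2 \<le> order G"
    then obtain z where z: "unique_order_p_subgroup G p z" and "p ^ 2 \<le> order G" by blast
    then show "(is_cyclic_group G \<and> order G \<ge> p ^ 2) \<or> (\<exists>n. is_gen_quaternion G n)"
      using unique_order_p_subgroup.cyclic_or_gen_quaternion[OF z] by blast
  next
    assume "(is_cyclic_group G \<and> order G \<ge> p ^ 2) \<or> (\<exists>n. is_gen_quaternion G n)"
    then show "(\<exists>z. unique_order_p_subgroup G p z) \<and> p ^ 2 \<le> order G"
    proof
      assume cyclic: "is_cyclic_group G \<and> order G \<ge> p ^ 2"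
      moreover have "1 < p ^ 2" using one_less_power[OF one_less_p, of 2] by simp
      ultimately show ?thesis using cyclic_unique_order_p_subgroup by fastforce
    next
      assume "\<exists>n. is_gen_quaternion G n"
      then show ?thesis using gen_quaternion_unique_order_p_subgroup by blast
    qed
  qed
qed

end
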